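(* Let $\sigma\ge0$, $\gamma>0$, $V=\sqrt{1+\sigma}$, let $(n^\varepsilon,u^\varepsilon,\phi^\varepsilon)$ be the solitary wave solution, and set $\widetilde N_\varepsilon(\xi)=\frac{n^\varepsilon(\xi)-1}{\varepsilon}$, $\widetilde E_\varepsilon(\xi)=\frac{-(\phi^\varepsilon)'(\xi)}{\varepsilon}$, and $h(n)=\frac{(V+\gamma\varepsilon)^2}{n^3}-\frac{\sigma}{n}$. There exist positive constants $\varepsilon_0$, $C$, $\delta_0$, independent of $\varepsilon$ and $\xi$, such that: (1) for all $0<\varepsilon<\varepsilon_0$, \[ \widetilde N_\varepsilon(0)>2\gamma V^{-1},\quad 4\gamma^2>\widetilde E_\varepsilon'(0)>2\gamma^2,\quad \tfrac12<\sup_{\xi\in\mathbb{R}}h(n^\varepsilon(\xi))<\tfrac32, \] \[ \sup_{\xi\in\mathbb{R}}\big(|\widetilde N_\varepsilon'(\xi)|+|\widetilde E_\varepsilon(\xi)|+|\widetilde E_\varepsilon''(\xi)|\big)\le C; \] (2) if $0<\delta<\delta_0$ ($\delta$ independent of $\varepsilon$ and $\xi$), then for all $0<\varepsilon<\varepsilon_0$ and every $\xi$ at which $\widetilde N_\varepsilon(\xi)\le\delta$, one has $|\widetilde E_\varepsilon(\xi)|>\sqrt\gamma\,\widetilde N_\varepsilon(\xi)$.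
   Context: For $\varepsilon>0$, consider the system in $\xi\in\mathbb{R}$: $-(V+\gamma\varepsilon)n'+(nu)'=0$, $-(V+\gamma\varepsilon)u'+uu'+\sigma n'/n=-\phi'$, $\varepsilon\phi''=e^\phi-n$, with $n\to1,u\to0,\phi\to0$ as $|\xi|\to\infty$. With $V=\sqrt{1+\sigma}$, for all sufficiently small $\varepsilon>0$ it has a non-trivial smooth solution unique up to translation; the "solitary wave solution" $(n^\varepsilon,u^\varepsilon,\phi^\varepsilon)$ is the translate that is even in $\xi$ and has all components strictly decreasing on $(0,\infty)$ (so $n^\varepsilon>1$, $\widetilde N_\varepsilon>0$ on $\mathbb{R}$ and $\widetilde E_\varepsilon\ge0$ on $[0,\infty)$). *)

theory Defs
  imports "HOL-Analysis.Analysis"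
begin

definition smooth_fun :: "(real \<Rightarrow> real) \<Rightarrow> bool" where
  "smooth_fun f \<longleftrightarrow> (\<forall>k x. ((deriv ^^ k) f) differentiable (at x))"

definition solves_system ::
  "real \<Rightarrow> real \<Rightarrow> real \<Rightarrow> real \<Rightarrow> (real \<Rightarrow> real) \<Rightarrow> (real \<Rightarrow> real) \<Rightarrow> (real \<Rightarrow> real) \<Rightarrow> bool" where
  "solves_system \<sigma> \<gamma> V \<epsilon> n u \<phi> \<longleftrightarrow>
     smooth_fun n \<and> smooth_fun u \<and> smooth_fun \<phi> \<and>
     (\<forall>x. n x > 0) \<and>
     (\<forall>x. - (V + \<gamma> * \<epsilon>) * deriv n x + deriv (\<lambda>y. n y * u y) x = 0) \<and>
     (\<forall>x. - (V + \<gamma> * \<epsilon>) * deriv u x + u x * deriv u x + \<sigma> * deriv n x / n x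
            = - deriv \<phi> x) \<and>
     (\<forall>x. \<epsilon> * deriv (deriv \<phi>) x = exp (\<phi> x) - n x) \<and>
     (n \<longlongrightarrow> 1) at_top \<and> (n \<longlongrightarrow> 1) at_bot \<and>
     (u \<longlongrightarrow> 0) at_top \<and> (u \<longlongrightarrow> 0) at_bot \<and>
     (\<phi> \<longlongrightarrow> 0) at_top \<and> (\<phi> \<longlongrightarrow> 0) at_bot"

definition solitary_wave ::
  "real \<Rightarrow> real \<Rightarrow> real \<Rightarrow> real \<Rightarrow> (real \<Rightarrow> real) \<Rightarrow> (real \<Rightarrow> real) \<Rightarrow> (real \<Rightarrow> real) \<Rightarrow> bool" where
  "solitary_wave \<sigma> \<gamma> V \<epsilon> n u \<phi> \<longleftrightarrow>
     solves_system \<sigma> \<gamma> V \<epsilon> n u \<phi> \<and>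
     \<not> (n = (\<lambda>_. 1) \<and> u = (\<lambda>_. 0) \<and> \<phi> = (\<lambda>_. 0)) \<and>
     (\<forall>x. n (-x) = n x \<and> u (-x) = u x \<and> \<phi> (-x) = \<phi> x) \<and>
     (\<forall>x y. 0 < x \<longrightarrow> x < y \<longrightarrow> n y < n x \<and> u y < u x \<and> \<phi> y < \<phi> x)"

end

theory Submission
  imports Defs
begin

text \<open>
Along a solitary wave of speed c = V + \<gamma> \<epsilon>, the first integrals of the system express u, \<phi> and the
field energy through the density alone: u = c - c / n, \<phi> = phi_of_n n, \<epsilon> \<phi>'' = poisson_rhs n and
\<epsilon> \<phi>'^2 / 2 = sagdeev n.  Writing n = 1 + \<epsilon> x, expansions with constants uniform in \<epsilon> give
sagdeev (1 + \<epsilon> x) / \<epsilon>^3 = x^2 (V \<gamma> - V^2 x / 3) + O(\<epsilon> x^2), the potential of the KdV soliton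
of amplitude 3 \<gamma> / V.  Since \<phi>'(0) = 0, the scaled maximum Nt 0 = (n 0 - 1) / \<epsilon> is a zero of the
scaled potential, which pins it within \<gamma> / (8 V) of 3 \<gamma> / V.  The remaining bounds follow from
Et^2 = 2 sagdeev n / \<epsilon>^3, Et' = - poisson_rhs n / \<epsilon>^2 and Et'' = - poisson_rhs' n n' / \<epsilon>^2,
evaluated with the expansions for 0 < x < 25 \<gamma> / (8 V).
\<close>

lemma smooth_fun_has_real_derivative: "smooth_fun f \<Longrightarrow> (f has_real_derivative deriv f x) (at x)"
  unfolding smooth_fun_def by (metis DERIV_deriv_iff_real_differentiable funpow_0)

lemma smooth_fun_deriv: "smooth_fun f \<Longrightarrow> smooth_fun (deriv f)"
  unfolding smooth_fun_def by (metis comp_apply funpow_Suc_right)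

lemma zero_derivative_eq_limit:
  fixes f :: "real \<Rightarrow> real"
  assumes "\<And>y. (f has_real_derivative 0) (at y)" and "(f \<longlongrightarrow> L) at_top"
  shows "f x = L"
proof -
  have "f = (\<lambda>_. f x)"
    using DERIV_isconst_all assms(1) by blast
  with assms(2) show ?thesis
    by (metis tendsto_const_iff trivial_limit_at_top_linorder)
qed

lemma deriv_square_limit_zero:
  fixes f f' :: "real \<Rightarrow> real"
  assumes f_lim: "(f \<longlongrightarrow> L) at_top"
    and f': "\<And>x. (f has_real_derivative f' x) (at x)"
    and sq_lim: "((\<lambda>x. (f' x)\<^sup>2) \<longlongrightarrow> A) at_top"
  shows "A = 0"
proof (rule ccontr)
  have "0 \<le> A"
    by (rule tendsto_lowerbound[OF sq_lim]) auto
  moreover assume "A \<noteq> 0"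
  ultimately have "0 < A" by simp
  then have "\<forall>\<^sub>F y in at_top. A / 2 < (f' y)\<^sup>2"
    using order_tendstoD(1)[OF sq_lim, of "A / 2"] by simp
  then obtain N1 where N1: "\<And>y. N1 \<le> y \<Longrightarrow> A / 2 < (f' y)\<^sup>2"
    by (auto simp: eventually_at_top_linorder)
  have "filterlim (\<lambda>y. 1 + y) at_top (at_top :: real filter)"
    by (rule filterlim_tendsto_add_at_top[OF tendsto_const filterlim_ident])
  then have diff_lim: "((\<lambda>y. (f (1 + y) - f y)\<^sup>2) \<longlongrightarrow> (L - L)\<^sup>2) at_top"
    by (intro tendsto_intros filterlim_compose[OF f_lim] f_lim)
  have "\<forall>\<^sub>F y in at_top. (f (1 + y) - f y)\<^sup>2 < A / 2"
    using order_tendstoD(2)[OF diff_lim, of "A / 2"] \<open>0 < A\<close> by simp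
  then obtain N2 where N2: "\<And>y. N2 \<le> y \<Longrightarrow> (f (1 + y) - f y)\<^sup>2 < A / 2"
    by (auto simp: eventually_at_top_linorder)
  define y where "y = max N1 N2"
  obtain z where z: "y < z" "f (1 + y) - f y = (1 + y - y) * f' z"
    using MVT2[of y "1 + y" f f'] f' by auto
  have "(f' z)\<^sup>2 < A / 2"
    using N2[of y] z unfolding y_def by simp
  moreover have "A / 2 < (f' z)\<^sup>2"
    using N1[of z] z unfolding y_def by simp
  ultimately show False by simp
qed

lemma even_deriv_zero:
  fixes f :: "real \<Rightarrow> real"
  assumes even: "\<And>x. f (- x) = f x" and D: "(f has_real_derivative D) (at 0)"
  shows "D = 0"
proof -
  have "(f has_real_derivative - D) (at 0)"
    using DERIV_mirror[where f = f and x = 0 and y = D] D even by simp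
  from DERIV_unique[OF D this] show ?thesis by simp
qed

lemma even_decreasing_bounds:
  fixes f :: "real \<Rightarrow> real"
  assumes even: "\<And>x. f (- x) = f x"
    and decreasing: "\<And>x y. 0 < x \<Longrightarrow> x < y \<Longrightarrow> f y < f x"
    and cont: "isCont f 0" and lim: "(f \<longlongrightarrow> L) at_top"
  shows "L < f x \<and> f x \<le> f 0"
proof -
  have pos: "L < f y \<and> f y \<le> f 0" if y: "0 < y" for y
  proof
    have "L \<le> f (y + 1)"
      by (rule tendsto_upperbound[OF lim])
        (use y in \<open>auto simp: eventually_at_top_linorder intro!: exI[of _ "y + 2"] less_imp_le decreasing\<close>)
    then show "L < f y"
      using decreasing[OF y, of "y + 1"] by simp
    have "(f \<longlongrightarrow> f 0) (at_right 0)"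
      using cont by (simp add: isCont_def filterlim_at_split)
    then show "f y \<le> f 0"
      by (rule tendsto_lowerbound)
        (use y in \<open>auto simp: eventually_at_right_field intro!: exI[of _ y] less_imp_le decreasing\<close>)
  qed
  consider "0 < x" | "x = 0" | "0 < - x" by linarith
  then show ?thesis
  proof cases
    case 2
    then show ?thesis using pos[of 1] by simp
  qed (use pos[of x] pos[of "- x"] even[of x] in auto)
qed

lemma abs_mult_deviation_le:
  fixes g h P a b p H :: real
  assumes "\<bar>g - P\<bar> \<le> a" "\<bar>h\<bar> \<le> H" "\<bar>P\<bar> \<le> p" "\<bar>h - 1\<bar> \<le> b"
  shows "\<bar>g * h - P\<bar> \<le> a * H + p * b"
proof -
  have "g * h - P = (g - P) * h + P * (h - 1)"
    by (simp add: algebra_simps)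
  moreover have "\<bar>(g - P) * h\<bar> \<le> a * H" "\<bar>P * (h - 1)\<bar> \<le> p * b"
    unfolding abs_mult using assms by (auto intro!: mult_mono order_trans[OF abs_ge_zero])
  ultimately show ?thesis
    using abs_triangle_ineq[of "(g - P) * h" "P * (h - 1)"] by linarith
qed

lemma abs_diff_le_deriv_bound:
  fixes f f' :: "real \<Rightarrow> real"
  assumes "0 \<le> t"
    and "\<And>s. 0 \<le> s \<Longrightarrow> s \<le> t \<Longrightarrow> (f has_real_derivative f' s) (at s within {0..t})"
    and "\<And>s. 0 \<le> s \<Longrightarrow> s \<le> t \<Longrightarrow> \<bar>f' s\<bar> \<le> B"
  shows "\<bar>f t - f 0\<bar> \<le> B * t"
  using field_differentiable_bound[of "{0..t}" f f' B t 0] assms by auto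

lemma abs_divide_deviation_le:
  fixes A B E \<epsilon> :: real
  assumes "0 < \<epsilon>" "\<bar>A - \<epsilon> ^ k * B\<bar> \<le> E"
  shows "\<bar>A / \<epsilon> ^ k - B\<bar> \<le> E / \<epsilon> ^ k"
proof -
  have "A / \<epsilon> ^ k - B = (A - \<epsilon> ^ k * B) / \<epsilon> ^ k"
    using assms(1) by (simp add: field_simps)
  then show ?thesis
    using assms by (simp add: abs_divide divide_right_mono)
qed

lemma eventually_at_right_0_small:
  fixes K \<eta> :: real
  assumes "0 < \<eta>"
  shows "\<forall>\<^sub>F \<epsilon> in at_right 0. 0 < \<epsilon> \<and> \<epsilon> \<le> 1 \<and> K * \<epsilon> \<le> \<eta>"
proof -
  have K_lim: "((\<lambda>\<epsilon>. K * \<epsilon>) \<longlongrightarrow> 0) (at_right 0)"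
    by (auto intro!: tendsto_eq_intros)
  have id_lim: "((\<lambda>\<epsilon>. \<epsilon>) \<longlongrightarrow> 0) (at_right (0::real))"
    by (rule tendsto_ident_at)
  show ?thesis
    using order_tendstoD(2)[OF K_lim assms] order_tendstoD(2)[OF id_lim zero_less_one]
      eventually_at_right_less[of 0]
    by eventually_elim auto
qed

lemma divide_power_bounds:
  fixes a m :: real
  assumes "0 \<le> a" "1 \<le> m"
  shows "0 \<le> a / m ^ k" "a / m ^ k \<le> a"
  using assms by (auto simp: divide_le_eq intro: order_trans[OF _ mult_left_mono[of 1]] one_le_power)

lemma abs_le_one_plus_square: "\<bar>x\<bar> \<le> 1 + (x::real)\<^sup>2"
proof -
  have "0 \<le> (\<bar>x\<bar> - 1 / 2)\<^sup>2" by simp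
  then show ?thesis
    by (simp add: power2_eq_square abs_mult_self_eq algebra_simps)
qed

section \<open>The potentials as functions of the density\<close>

definition phi_of_n :: "real \<Rightarrow> real \<Rightarrow> real \<Rightarrow> real" where
  "phi_of_n \<sigma> c m = c\<^sup>2 / 2 * (1 - 1 / m\<^sup>2) - \<sigma> * ln m"

definition h_of_n :: "real \<Rightarrow> real \<Rightarrow> real \<Rightarrow> real" where
  "h_of_n \<sigma> c m = c\<^sup>2 / m ^ 3 - \<sigma> / m"

definition dh_of_n :: "real \<Rightarrow> real \<Rightarrow> real \<Rightarrow> real" where
  "dh_of_n \<sigma> c m = \<sigma> / m\<^sup>2 - 3 * c\<^sup>2 / m ^ 4"

definition d2h_of_n :: "real \<Rightarrow> real \<Rightarrow> real \<Rightarrow> real" where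
  "d2h_of_n \<sigma> c m = 12 * c\<^sup>2 / m ^ 5 - 2 * \<sigma> / m ^ 3"

definition poisson_rhs :: "real \<Rightarrow> real \<Rightarrow> real \<Rightarrow> real" where
  "poisson_rhs \<sigma> c m = exp (phi_of_n \<sigma> c m) - m"

definition d_poisson_rhs :: "real \<Rightarrow> real \<Rightarrow> real \<Rightarrow> real" where
  "d_poisson_rhs \<sigma> c m = exp (phi_of_n \<sigma> c m) * h_of_n \<sigma> c m - 1"

definition d2_poisson_rhs :: "real \<Rightarrow> real \<Rightarrow> real \<Rightarrow> real" where
  "d2_poisson_rhs \<sigma> c m = exp (phi_of_n \<sigma> c m) * ((h_of_n \<sigma> c m)\<^sup>2 + dh_of_n \<sigma> c m)"

definition d3_poisson_rhs :: "real \<Rightarrow> real \<Rightarrow> real \<Rightarrow> real" where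
  "d3_poisson_rhs \<sigma> c m = exp (phi_of_n \<sigma> c m) *
     (h_of_n \<sigma> c m * ((h_of_n \<sigma> c m)\<^sup>2 + dh_of_n \<sigma> c m)
      + 2 * h_of_n \<sigma> c m * dh_of_n \<sigma> c m + d2h_of_n \<sigma> c m)"

definition sagdeev :: "real \<Rightarrow> real \<Rightarrow> real \<Rightarrow> real" where
  "sagdeev \<sigma> c m = exp (phi_of_n \<sigma> c m) + c\<^sup>2 / m + \<sigma> * m - 1 - c\<^sup>2 - \<sigma>"

lemma phi_of_n_has_derivative [derivative_intros]:
  "(f has_real_derivative f') (at x within S) \<Longrightarrow> 0 < f x \<Longrightarrow>
   ((\<lambda>x. phi_of_n \<sigma> c (f x)) has_real_derivative h_of_n \<sigma> c (f x) * f') (at x within S)"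
  unfolding phi_of_n_def h_of_n_def
  by (auto intro!: derivative_eq_intros simp: field_simps power2_eq_square power3_eq_cube)

lemma h_of_n_has_derivative [derivative_intros]:
  "(f has_real_derivative f') (at x within S) \<Longrightarrow> 0 < f x \<Longrightarrow>
   ((\<lambda>x. h_of_n \<sigma> c (f x)) has_real_derivative dh_of_n \<sigma> c (f x) * f') (at x within S)"
  unfolding h_of_n_def dh_of_n_def
  by (auto intro!: derivative_eq_intros simp: field_simps eval_nat_numeral)

lemma dh_of_n_has_derivative [derivative_intros]:
  "(f has_real_derivative f') (at x within S) \<Longrightarrow> 0 < f x \<Longrightarrow>
   ((\<lambda>x. dh_of_n \<sigma> c (f x)) has_real_derivative d2h_of_n \<sigma> c (f x) * f') (at x within S)"
  unfolding dh_of_n_def d2h_of_n_def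
  by (auto intro!: derivative_eq_intros simp: field_simps eval_nat_numeral)

lemma poisson_rhs_has_derivative [derivative_intros]:
  "(f has_real_derivative f') (at x within S) \<Longrightarrow> 0 < f x \<Longrightarrow>
   ((\<lambda>x. poisson_rhs \<sigma> c (f x)) has_real_derivative d_poisson_rhs \<sigma> c (f x) * f') (at x within S)"
  unfolding poisson_rhs_def d_poisson_rhs_def
  by (auto intro!: derivative_eq_intros simp: algebra_simps)

lemma d_poisson_rhs_has_derivative [derivative_intros]:
  "(f has_real_derivative f') (at x within S) \<Longrightarrow> 0 < f x \<Longrightarrow>
   ((\<lambda>x. d_poisson_rhs \<sigma> c (f x)) has_real_derivative d2_poisson_rhs \<sigma> c (f x) * f') (at x within S)"
  unfolding d_poisson_rhs_def d2_poisson_rhs_def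
  by (auto intro!: derivative_eq_intros simp: algebra_simps power2_eq_square)

lemma d2_poisson_rhs_has_derivative [derivative_intros]:
  "(f has_real_derivative f') (at x within S) \<Longrightarrow> 0 < f x \<Longrightarrow>
   ((\<lambda>x. d2_poisson_rhs \<sigma> c (f x)) has_real_derivative d3_poisson_rhs \<sigma> c (f x) * f') (at x within S)"
  unfolding d2_poisson_rhs_def d3_poisson_rhs_def
  by (auto intro!: derivative_eq_intros simp: algebra_simps power2_eq_square)

lemma sagdeev_has_derivative [derivative_intros]:
  "(f has_real_derivative f') (at x within S) \<Longrightarrow> 0 < f x \<Longrightarrow>
   ((\<lambda>x. sagdeev \<sigma> c (f x)) has_real_derivative poisson_rhs \<sigma> c (f x) * h_of_n \<sigma> c (f x) * f')
     (at x within S)"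
  unfolding sagdeev_def poisson_rhs_def
  by (auto intro!: derivative_eq_intros simp: h_of_n_def field_simps power2_eq_square power3_eq_cube)

lemma values_at_one:
  "phi_of_n \<sigma> c 1 = 0" "poisson_rhs \<sigma> c 1 = 0" "sagdeev \<sigma> c 1 = 0"
  "d_poisson_rhs \<sigma> c 1 = c\<^sup>2 - \<sigma> - 1" "h_of_n \<sigma> c 1 = c\<^sup>2 - \<sigma>"
  "d2_poisson_rhs \<sigma> c 1 = (c\<^sup>2 - \<sigma>)\<^sup>2 + \<sigma> - 3 * c\<^sup>2"
  by (simp_all add: phi_of_n_def poisson_rhs_def sagdeev_def d_poisson_rhs_def h_of_n_def
      d2_poisson_rhs_def dh_of_n_def)

lemma abs_h_of_n_le:
  assumes "1 \<le> m" "0 \<le> \<sigma>"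
  shows "\<bar>h_of_n \<sigma> c m\<bar> \<le> c\<^sup>2 + \<sigma>"
  using divide_power_bounds[OF zero_le_power2 assms(1), of c 3] divide_power_bounds[OF assms(2,1), of 1]
  unfolding h_of_n_def abs_le_iff power_one_right by linarith

lemma abs_dh_of_n_le:
  assumes "1 \<le> m" "0 \<le> \<sigma>"
  shows "\<bar>dh_of_n \<sigma> c m\<bar> \<le> 3 * c\<^sup>2 + \<sigma>"
proof -
  have "0 \<le> 3 * c\<^sup>2" by simp
  from divide_power_bounds[OF this assms(1), of 4] divide_power_bounds[OF assms(2,1), of 2]
  show ?thesis unfolding dh_of_n_def abs_le_iff by linarith
qed

lemma abs_d2h_of_n_le:
  assumes "1 \<le> m" "0 \<le> \<sigma>"
  shows "\<bar>d2h_of_n \<sigma> c m\<bar> \<le> 12 * c\<^sup>2 + 2 * \<sigma>"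
proof -
  have "0 \<le> 12 * c\<^sup>2" "0 \<le> 2 * \<sigma>" using assms(2) by simp_all
  from divide_power_bounds[OF this(1) assms(1), of 5] divide_power_bounds[OF this(2) assms(1), of 3]
  show ?thesis unfolding d2h_of_n_def abs_le_iff by linarith
qed

lemma phi_of_n_le:
  assumes "1 \<le> m" "0 \<le> \<sigma>"
  shows "phi_of_n \<sigma> c m \<le> c\<^sup>2 / 2"
proof -
  have "c\<^sup>2 / 2 * (1 - 1 / m\<^sup>2) \<le> c\<^sup>2 / 2"
    by (rule mult_left_le) (use assms in auto)
  moreover have "0 \<le> \<sigma> * ln m"
    using assms by simp
  ultimately show ?thesis
    unfolding phi_of_n_def by linarith
qed

lemma d3_poisson_rhs_bounded:
  assumes "0 \<le> \<sigma>"
  shows "\<exists>M. \<forall>c m. c\<^sup>2 \<le> B \<longrightarrow> 1 \<le> m \<longrightarrow> \<bar>d3_poisson_rhs \<sigma> c m\<bar> \<le> M"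
proof (intro exI allI impI)
  fix c m :: real
  assume c: "c\<^sup>2 \<le> B" and m: "1 \<le> m"
  define h h' h'' where "h = h_of_n \<sigma> c m" and "h' = dh_of_n \<sigma> c m" and "h'' = d2h_of_n \<sigma> c m"
  have bounds: "\<bar>h\<bar> \<le> B + \<sigma>" "\<bar>h'\<bar> \<le> 3 * B + \<sigma>" "\<bar>h''\<bar> \<le> 12 * B + 2 * \<sigma>"
    using abs_h_of_n_le[OF m assms, of c] abs_dh_of_n_le[OF m assms, of c]
      abs_d2h_of_n_le[OF m assms, of c] c
    unfolding h_def h'_def h''_def by linarith+
  have "\<bar>h\<^sup>2 + h'\<bar> \<le> \<bar>h\<bar>\<^sup>2 + \<bar>h'\<bar>"
    using abs_triangle_ineq[of "h\<^sup>2" h'] by simp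
  then have "\<bar>h * (h\<^sup>2 + h')\<bar> \<le> \<bar>h\<bar> * (\<bar>h\<bar>\<^sup>2 + \<bar>h'\<bar>)"
    unfolding abs_mult by (rule mult_left_mono) simp
  then have "\<bar>h * (h\<^sup>2 + h') + 2 * h * h' + h''\<bar> \<le> \<bar>h\<bar> * (\<bar>h\<bar>\<^sup>2 + \<bar>h'\<bar>) + 2 * \<bar>h\<bar> * \<bar>h'\<bar> + \<bar>h''\<bar>"
    by (simp add: abs_mult abs_triangle_ineq4 order_trans[OF abs_triangle_ineq] add_mono)
  also have "\<dots> \<le> (B + \<sigma>) * ((B + \<sigma>)\<^sup>2 + (3 * B + \<sigma>)) + 2 * (B + \<sigma>) * (3 * B + \<sigma>) + (12 * B + 2 * \<sigma>)"
    using bounds by (intro add_mono mult_mono power_mono) auto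
  finally have "\<bar>h * (h\<^sup>2 + h') + 2 * h * h' + h''\<bar> \<le> \<dots>" .
  moreover have "exp (phi_of_n \<sigma> c m) \<le> exp (B / 2)"
    using phi_of_n_le[OF m assms, of c] c by simp
  ultimately show "\<bar>d3_poisson_rhs \<sigma> c m\<bar> \<le> exp (B / 2) *
      ((B + \<sigma>) * ((B + \<sigma>)\<^sup>2 + (3 * B + \<sigma>)) + 2 * (B + \<sigma>) * (3 * B + \<sigma>) + (12 * B + 2 * \<sigma>))"
    unfolding d3_poisson_rhs_def h_def h'_def h''_def abs_mult
    by (intro mult_mono) auto
qed

section \<open>Expansions uniform in the small parameter\<close>

text \<open>The limit of sagdeev \<sigma> (V + \<gamma> \<epsilon>) (1 + \<epsilon> x) / \<epsilon>^3 as \<epsilon> tends to 0; its positive zero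
  3 \<gamma> / V is the amplitude of the KdV soliton.\<close>

definition kdv_sagdeev :: "real \<Rightarrow> real \<Rightarrow> real \<Rightarrow> real" where
  "kdv_sagdeev V \<gamma> x = x\<^sup>2 * (V * \<gamma> - V\<^sup>2 * x / 3)"

lemma kdv_sagdeev_lower:
  assumes "0 \<le> V" "V * x \<le> a"
  shows "x\<^sup>2 * (V * \<gamma> - V * a / 3) \<le> kdv_sagdeev V \<gamma> x"
proof -
  have "V * (V * x) \<le> V * a"
    by (rule mult_left_mono[OF assms(2) assms(1)])
  then show ?thesis
    unfolding kdv_sagdeev_def by (intro mult_left_mono) (auto simp: power2_eq_square)
qed

lemma kdv_sagdeev_upper:
  assumes "0 \<le> V" "a \<le> V * x"
  shows "kdv_sagdeev V \<gamma> x \<le> x\<^sup>2 * (V * \<gamma> - V * a / 3)"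
proof -
  have "V * a \<le> V * (V * x)"
    by (rule mult_left_mono[OF assms(2) assms(1)])
  then show ?thesis
    unfolding kdv_sagdeev_def by (intro mult_left_mono) (auto simp: power2_eq_square)
qed

text \<open>The window 0 \<le> x \<le> 25 \<gamma> / (8 V) contains the scaled amplitude (amplitude_lt); the margins
  \<gamma> / 48, \<gamma>^2 / 4 and 1 / 4 are the ones the estimates of small_amplitude_wave can absorb.\<close>

definition kdv_regime :: "real \<Rightarrow> real \<Rightarrow> real \<Rightarrow> real \<Rightarrow> real \<Rightarrow> bool" where
  "kdv_regime \<sigma> \<gamma> V K \<epsilon> \<longleftrightarrow> (\<forall>x. 0 \<le> x \<and> x \<le> 25 * \<gamma> / (8 * V) \<longrightarrow>
     \<bar>sagdeev \<sigma> (V + \<gamma> * \<epsilon>) (1 + \<epsilon> * x) / \<epsilon> ^ 3 - kdv_sagdeev V \<gamma> x\<bar> \<le> \<gamma> / 48 * x\<^sup>2 \<and>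
     \<bar>poisson_rhs \<sigma> (V + \<gamma> * \<epsilon>) (1 + \<epsilon> * x) / \<epsilon>\<^sup>2 - (2 * V * \<gamma> * x - V\<^sup>2 * x\<^sup>2)\<bar> \<le> \<gamma>\<^sup>2 / 4 \<and>
     \<bar>h_of_n \<sigma> (V + \<gamma> * \<epsilon>) (1 + \<epsilon> * x) - 1\<bar> \<le> 1 / 4 \<and>
     \<bar>d_poisson_rhs \<sigma> (V + \<gamma> * \<epsilon>) (1 + \<epsilon> * x)\<bar> \<le> K * \<epsilon>)"

text \<open>Each expansion follows from the previous one by the mean value theorem on [1, 1 + t], starting
  from the boundedness of d3_poisson_rhs; all constants are uniform in 0 < \<epsilon> \<le> 1.\<close>

context
  fixes \<sigma> \<gamma> V :: real
  assumes sigma_nonneg: "0 \<le> \<sigma>" and gamma_pos: "0 < \<gamma>" and V_def: "V = sqrt (1 + \<sigma>)"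
begin

lemma V_ge_one: "1 \<le> V"
  using V_def sigma_nonneg by simp

lemma sigma_eq: "\<sigma> = V\<^sup>2 - 1"
  using V_def sigma_nonneg by simp

lemma speed_squared_bounds:
  assumes "0 < \<epsilon>" "\<epsilon> \<le> 1"
  shows "(V + \<gamma> * \<epsilon>)\<^sup>2 \<le> (V + \<gamma>)\<^sup>2"
    and "0 \<le> (V + \<gamma> * \<epsilon>)\<^sup>2 - V\<^sup>2"
    and "(V + \<gamma> * \<epsilon>)\<^sup>2 - V\<^sup>2 \<le> (2 * V * \<gamma> + \<gamma>\<^sup>2) * \<epsilon>"
proof -
  have speed: "(V + \<gamma> * \<epsilon>)\<^sup>2 - V\<^sup>2 = 2 * V * \<gamma> * \<epsilon> + \<gamma>\<^sup>2 * \<epsilon>\<^sup>2"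
    by (simp add: power2_eq_square algebra_simps)
  show "(V + \<gamma> * \<epsilon>)\<^sup>2 \<le> (V + \<gamma>)\<^sup>2"
    using assms gamma_pos V_ge_one by (intro power_mono) (auto simp: mult_left_le)
  show "0 \<le> (V + \<gamma> * \<epsilon>)\<^sup>2 - V\<^sup>2"
    unfolding speed using assms gamma_pos V_ge_one by simp
  have "\<gamma>\<^sup>2 * \<epsilon>\<^sup>2 \<le> \<gamma>\<^sup>2 * \<epsilon>"
    using assms by (intro mult_left_mono) (auto simp: power2_eq_square mult_left_le)
  then show "(V + \<gamma> * \<epsilon>)\<^sup>2 - V\<^sup>2 \<le> (2 * V * \<gamma> + \<gamma>\<^sup>2) * \<epsilon>"
    unfolding speed by (simp add: algebra_simps)
qed

lemma d2_poisson_rhs_expansion: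
  "\<exists>K\<ge>0. \<forall>\<epsilon> t. 0 < \<epsilon> \<longrightarrow> \<epsilon> \<le> 1 \<longrightarrow> 0 \<le> t \<longrightarrow>
     \<bar>d2_poisson_rhs \<sigma> (V + \<gamma> * \<epsilon>) (1 + t) + 2 * V\<^sup>2\<bar> \<le> K * (\<epsilon> + t)"
proof -
  obtain M where M: "\<And>c m. c\<^sup>2 \<le> (V + \<gamma>)\<^sup>2 \<Longrightarrow> 1 \<le> m \<Longrightarrow> \<bar>d3_poisson_rhs \<sigma> c m\<bar> \<le> M"
    using d3_poisson_rhs_bounded[OF sigma_nonneg] by blast
  define D where "D = 2 * V * \<gamma> + \<gamma>\<^sup>2"
  have "0 \<le> M" using M[of "V + \<gamma>" 1] by simp
  moreover have "0 \<le> D" unfolding D_def using V_ge_one gamma_pos by simp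
  moreover have "\<bar>d2_poisson_rhs \<sigma> (V + \<gamma> * \<epsilon>) (1 + t) + 2 * V\<^sup>2\<bar> \<le> (M + D + D\<^sup>2) * (\<epsilon> + t)"
    if \<epsilon>: "0 < \<epsilon>" "\<epsilon> \<le> 1" and t: "0 \<le> t" for \<epsilon> t
  proof -
    define c where "c = V + \<gamma> * \<epsilon>"
    define d where "d = c\<^sup>2 - V\<^sup>2"
    have d: "0 \<le> d" "d \<le> D * \<epsilon>"
      using speed_squared_bounds[OF \<epsilon>] unfolding d_def c_def D_def by auto
    have "\<bar>d2_poisson_rhs \<sigma> c (1 + t) - d2_poisson_rhs \<sigma> c (1 + 0)\<bar> \<le> M * t"
    proof (rule abs_diff_le_deriv_bound[OF t])
      fix s assume s: "0 \<le> s" "s \<le> t"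
      show "((\<lambda>s. d2_poisson_rhs \<sigma> c (1 + s)) has_real_derivative d3_poisson_rhs \<sigma> c (1 + s))
          (at s within {0..t})"
        using s by (auto intro!: derivative_eq_intros)
      show "\<bar>d3_poisson_rhs \<sigma> c (1 + s)\<bar> \<le> M"
        using M speed_squared_bounds(1)[OF \<epsilon>] s unfolding c_def by simp
    qed
    moreover have "d2_poisson_rhs \<sigma> c (1 + 0) + 2 * V\<^sup>2 = d\<^sup>2 - d"
      using values_at_one(6)[of \<sigma> c] unfolding d_def
      by (simp add: sigma_eq power2_eq_square algebra_simps)
    moreover have "d\<^sup>2 \<le> D\<^sup>2 * \<epsilon>"
    proof -
      have "d\<^sup>2 \<le> (D * \<epsilon>)\<^sup>2" using d by (intro power_mono) auto
      also have "\<dots> = D\<^sup>2 * \<epsilon>\<^sup>2"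
        by (simp add: power_mult_distrib)
      also have "\<dots> \<le> D\<^sup>2 * \<epsilon>"
        using \<epsilon> by (intro mult_left_mono) (auto simp: power2_eq_square mult_left_le)
      finally show ?thesis .
    qed
    ultimately have "\<bar>d2_poisson_rhs \<sigma> c (1 + t) + 2 * V\<^sup>2\<bar> \<le> M * t + D * \<epsilon> + D\<^sup>2 * \<epsilon>"
      using d zero_le_power2[of d] unfolding abs_le_iff by linarith
    also have "\<dots> \<le> (M + D + D\<^sup>2) * (\<epsilon> + t)"
      using \<open>0 \<le> M\<close> \<open>0 \<le> D\<close> \<epsilon> t by (simp add: algebra_simps)
    finally show ?thesis unfolding c_def .
  qed
  ultimately show ?thesis
    by (intro exI[of _ "M + D + D\<^sup>2"]) auto
qed

lemma d_poisson_rhs_expansion: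
  "\<exists>K\<ge>0. \<forall>\<epsilon> t. 0 < \<epsilon> \<longrightarrow> \<epsilon> \<le> 1 \<longrightarrow> 0 \<le> t \<longrightarrow>
     \<bar>d_poisson_rhs \<sigma> (V + \<gamma> * \<epsilon>) (1 + t) - (2 * V * \<gamma> * \<epsilon> - 2 * V\<^sup>2 * t)\<bar> \<le> K * (\<epsilon> + t)\<^sup>2"
proof -
  obtain KA where KA: "0 \<le> KA" "\<And>\<epsilon> t. 0 < \<epsilon> \<Longrightarrow> \<epsilon> \<le> 1 \<Longrightarrow> 0 \<le> t \<Longrightarrow>
      \<bar>d2_poisson_rhs \<sigma> (V + \<gamma> * \<epsilon>) (1 + t) + 2 * V\<^sup>2\<bar> \<le> KA * (\<epsilon> + t)"
    using d2_poisson_rhs_expansion by blast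
  have "\<bar>d_poisson_rhs \<sigma> (V + \<gamma> * \<epsilon>) (1 + t) - (2 * V * \<gamma> * \<epsilon> - 2 * V\<^sup>2 * t)\<bar>
      \<le> (\<gamma>\<^sup>2 + KA) * (\<epsilon> + t)\<^sup>2"
    if \<epsilon>: "0 < \<epsilon>" "\<epsilon> \<le> 1" and t: "0 \<le> t" for \<epsilon> t
  proof -
    define c where "c = V + \<gamma> * \<epsilon>"
    define f where "f s = d_poisson_rhs \<sigma> c (1 + s) - (2 * V * \<gamma> * \<epsilon> - 2 * V\<^sup>2 * s)" for s
    have "\<bar>f t - f 0\<bar> \<le> KA * (\<epsilon> + t) * t"
    proof (rule abs_diff_le_deriv_bound[OF t])
      fix s assume s: "0 \<le> s" "s \<le> t"
      show "(f has_real_derivative d2_poisson_rhs \<sigma> c (1 + s) + 2 * V\<^sup>2) (at s within {0..t})"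
        unfolding f_def using s by (auto intro!: derivative_eq_intros)
      have "\<bar>d2_poisson_rhs \<sigma> c (1 + s) + 2 * V\<^sup>2\<bar> \<le> KA * (\<epsilon> + s)"
        unfolding c_def using KA(2) \<epsilon> s by blast
      also have "\<dots> \<le> KA * (\<epsilon> + t)"
        using KA(1) s by (intro mult_left_mono) auto
      finally show "\<bar>d2_poisson_rhs \<sigma> c (1 + s) + 2 * V\<^sup>2\<bar> \<le> KA * (\<epsilon> + t)" .
    qed
    moreover have "f 0 = \<gamma>\<^sup>2 * \<epsilon>\<^sup>2"
      using values_at_one(4)[of \<sigma> c] unfolding f_def c_def
      by (simp add: sigma_eq power2_eq_square algebra_simps)
    moreover have "\<gamma>\<^sup>2 * \<epsilon>\<^sup>2 \<le> \<gamma>\<^sup>2 * (\<epsilon> + t)\<^sup>2"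
      using \<epsilon> t by (intro mult_left_mono power_mono) auto
    moreover have "KA * (\<epsilon> + t) * t \<le> KA * (\<epsilon> + t)\<^sup>2"
      unfolding power2_eq_square mult.assoc using \<epsilon> t KA(1) by (intro mult_left_mono) auto
    moreover have "0 \<le> \<gamma>\<^sup>2 * \<epsilon>\<^sup>2"
      by simp
    ultimately have "\<bar>f t\<bar> \<le> (\<gamma>\<^sup>2 + KA) * (\<epsilon> + t)\<^sup>2"
      unfolding distrib_right abs_le_iff by linarith
    then show ?thesis unfolding f_def c_def .
  qed
  then show ?thesis
    using KA(1) by (intro exI[of _ "\<gamma>\<^sup>2 + KA"]) auto
qed

lemma poisson_rhs_expansion:
  "\<exists>K\<ge>0. \<forall>\<epsilon> t. 0 < \<epsilon> \<longrightarrow> \<epsilon> \<le> 1 \<longrightarrow> 0 \<le> t \<longrightarrow>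
     \<bar>poisson_rhs \<sigma> (V + \<gamma> * \<epsilon>) (1 + t) - (2 * V * \<gamma> * \<epsilon> * t - V\<^sup>2 * t\<^sup>2)\<bar> \<le> K * (\<epsilon> + t)\<^sup>2 * t"
proof -
  obtain KB where KB: "0 \<le> KB" "\<And>\<epsilon> t. 0 < \<epsilon> \<Longrightarrow> \<epsilon> \<le> 1 \<Longrightarrow> 0 \<le> t \<Longrightarrow>
      \<bar>d_poisson_rhs \<sigma> (V + \<gamma> * \<epsilon>) (1 + t) - (2 * V * \<gamma> * \<epsilon> - 2 * V\<^sup>2 * t)\<bar> \<le> KB * (\<epsilon> + t)\<^sup>2"
    using d_poisson_rhs_expansion by blast
  have "\<bar>poisson_rhs \<sigma> (V + \<gamma> * \<epsilon>) (1 + t) - (2 * V * \<gamma> * \<epsilon> * t - V\<^sup>2 * t\<^sup>2)\<bar> \<le> KB * (\<epsilon> + t)\<^sup>2 * t"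
    if \<epsilon>: "0 < \<epsilon>" "\<epsilon> \<le> 1" and t: "0 \<le> t" for \<epsilon> t
  proof -
    define c where "c = V + \<gamma> * \<epsilon>"
    define f where "f s = poisson_rhs \<sigma> c (1 + s) - (2 * V * \<gamma> * \<epsilon> * s - V\<^sup>2 * s\<^sup>2)" for s
    have "\<bar>f t - f 0\<bar> \<le> KB * (\<epsilon> + t)\<^sup>2 * t"
    proof (rule abs_diff_le_deriv_bound[OF t])
      fix s assume s: "0 \<le> s" "s \<le> t"
      show "(f has_real_derivative d_poisson_rhs \<sigma> c (1 + s) - (2 * V * \<gamma> * \<epsilon> - 2 * V\<^sup>2 * s))
          (at s within {0..t})"
        unfolding f_def using s by (auto intro!: derivative_eq_intros)
      have "\<bar>d_poisson_rhs \<sigma> c (1 + s) - (2 * V * \<gamma> * \<epsilon> - 2 * V\<^sup>2 * s)\<bar> \<le> KB * (\<epsilon> + s)\<^sup>2"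
        unfolding c_def using KB(2) \<epsilon> s by blast
      also have "\<dots> \<le> KB * (\<epsilon> + t)\<^sup>2"
        using KB(1) \<epsilon> s by (intro mult_left_mono power_mono) auto
      finally show "\<bar>d_poisson_rhs \<sigma> c (1 + s) - (2 * V * \<gamma> * \<epsilon> - 2 * V\<^sup>2 * s)\<bar> \<le> KB * (\<epsilon> + t)\<^sup>2" .
    qed
    moreover have "f 0 = 0"
      unfolding f_def by (simp add: values_at_one)
    ultimately show ?thesis unfolding f_def c_def by simp
  qed
  then show ?thesis
    using KB(1) by (intro exI[of _ KB]) auto
qed

lemma h_of_n_expansion:
  "\<exists>K\<ge>0. \<forall>\<epsilon> t. 0 < \<epsilon> \<longrightarrow> \<epsilon> \<le> 1 \<longrightarrow> 0 \<le> t \<longrightarrow>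
     \<bar>h_of_n \<sigma> (V + \<gamma> * \<epsilon>) (1 + t) - 1\<bar> \<le> K * (\<epsilon> + t)"
proof -
  define D where "D = 2 * V * \<gamma> + \<gamma>\<^sup>2"
  define M where "M = 3 * (V + \<gamma>)\<^sup>2 + \<sigma>"
  have "0 \<le> D" "0 \<le> M"
    unfolding D_def M_def using V_ge_one gamma_pos sigma_nonneg by simp_all
  have "\<bar>h_of_n \<sigma> (V + \<gamma> * \<epsilon>) (1 + t) - 1\<bar> \<le> (M + D) * (\<epsilon> + t)"
    if \<epsilon>: "0 < \<epsilon>" "\<epsilon> \<le> 1" and t: "0 \<le> t" for \<epsilon> t
  proof -
    define c where "c = V + \<gamma> * \<epsilon>"
    have "\<bar>h_of_n \<sigma> c (1 + t) - h_of_n \<sigma> c (1 + 0)\<bar> \<le> M * t"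
    proof (rule abs_diff_le_deriv_bound[OF t])
      fix s assume s: "0 \<le> s" "s \<le> t"
      show "((\<lambda>s. h_of_n \<sigma> c (1 + s)) has_real_derivative dh_of_n \<sigma> c (1 + s)) (at s within {0..t})"
        using s by (auto intro!: derivative_eq_intros)
      show "\<bar>dh_of_n \<sigma> c (1 + s)\<bar> \<le> M"
        using abs_dh_of_n_le[of "1 + s" \<sigma> c] speed_squared_bounds(1)[OF \<epsilon>] s sigma_nonneg
        unfolding M_def c_def by simp
    qed
    moreover have "h_of_n \<sigma> c (1 + 0) - 1 = c\<^sup>2 - V\<^sup>2"
      by (simp add: values_at_one sigma_eq)
    ultimately have "\<bar>h_of_n \<sigma> c (1 + t) - 1\<bar> \<le> M * t + D * \<epsilon>"
      using speed_squared_bounds(2,3)[OF \<epsilon>] unfolding c_def D_def by linarith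
    also have "\<dots> \<le> (M + D) * (\<epsilon> + t)"
      using \<open>0 \<le> D\<close> \<open>0 \<le> M\<close> \<epsilon> t by (simp add: algebra_simps)
    finally show ?thesis unfolding c_def .
  qed
  then show ?thesis
    using \<open>0 \<le> D\<close> \<open>0 \<le> M\<close> by (intro exI[of _ "M + D"]) auto
qed

lemma sagdeev_deriv_expansion:
  "\<exists>K\<ge>0. \<forall>\<epsilon> t. 0 < \<epsilon> \<longrightarrow> \<epsilon> \<le> 1 \<longrightarrow> 0 \<le> t \<longrightarrow>
     \<bar>poisson_rhs \<sigma> (V + \<gamma> * \<epsilon>) (1 + t) * h_of_n \<sigma> (V + \<gamma> * \<epsilon>) (1 + t)
       - (2 * V * \<gamma> * \<epsilon> * t - V\<^sup>2 * t\<^sup>2)\<bar> \<le> K * (\<epsilon> + t)\<^sup>2 * t"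
proof -
  obtain KC where KC: "0 \<le> KC" "\<And>\<epsilon> t. 0 < \<epsilon> \<Longrightarrow> \<epsilon> \<le> 1 \<Longrightarrow> 0 \<le> t \<Longrightarrow>
      \<bar>poisson_rhs \<sigma> (V + \<gamma> * \<epsilon>) (1 + t) - (2 * V * \<gamma> * \<epsilon> * t - V\<^sup>2 * t\<^sup>2)\<bar> \<le> KC * (\<epsilon> + t)\<^sup>2 * t"
    using poisson_rhs_expansion by blast
  obtain KH where KH: "0 \<le> KH" "\<And>\<epsilon> t. 0 < \<epsilon> \<Longrightarrow> \<epsilon> \<le> 1 \<Longrightarrow> 0 \<le> t \<Longrightarrow>
      \<bar>h_of_n \<sigma> (V + \<gamma> * \<epsilon>) (1 + t) - 1\<bar> \<le> KH * (\<epsilon> + t)"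
    using h_of_n_expansion by blast
  define H where "H = (V + \<gamma>)\<^sup>2 + \<sigma>"
  define A where "A = 2 * V * \<gamma> + V\<^sup>2"
  have "0 \<le> H" "0 \<le> A"
    unfolding H_def A_def using sigma_nonneg V_ge_one gamma_pos by simp_all
  have "\<bar>poisson_rhs \<sigma> (V + \<gamma> * \<epsilon>) (1 + t) * h_of_n \<sigma> (V + \<gamma> * \<epsilon>) (1 + t)
       - (2 * V * \<gamma> * \<epsilon> * t - V\<^sup>2 * t\<^sup>2)\<bar> \<le> (KC * H + A * KH) * (\<epsilon> + t)\<^sup>2 * t"
    if \<epsilon>: "0 < \<epsilon>" "\<epsilon> \<le> 1" and t: "0 \<le> t" for \<epsilon> t
  proof -
    define c where "c = V + \<gamma> * \<epsilon>"
    define g h P where "g = poisson_rhs \<sigma> c (1 + t)" and "h = h_of_n \<sigma> c (1 + t)"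
      and "P = 2 * V * \<gamma> * \<epsilon> * t - V\<^sup>2 * t\<^sup>2"
    have dev: "\<bar>g - P\<bar> \<le> KC * (\<epsilon> + t)\<^sup>2 * t" "\<bar>h - 1\<bar> \<le> KH * (\<epsilon> + t)"
      using KC(2)[OF \<epsilon> t] KH(2)[OF \<epsilon> t] unfolding g_def h_def P_def c_def by simp_all
    have h_le: "\<bar>h\<bar> \<le> H"
      using abs_h_of_n_le[of "1 + t" \<sigma> c] speed_squared_bounds(1)[OF \<epsilon>] t sigma_nonneg
      unfolding h_def H_def c_def by simp
    have P_le: "\<bar>P\<bar> \<le> A * (\<epsilon> + t) * t"
    proof -
      have et: "\<epsilon> * t \<le> (\<epsilon> + t) * t" "t\<^sup>2 \<le> (\<epsilon> + t) * t"
        using \<epsilon> t by (auto simp: power2_eq_square intro: mult_right_mono)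
      have "\<bar>P\<bar> \<le> 2 * V * \<gamma> * (\<epsilon> * t) + V\<^sup>2 * t\<^sup>2"
        unfolding P_def using \<epsilon> t V_ge_one gamma_pos by (simp add: abs_le_iff mult.assoc)
      also have "\<dots> \<le> 2 * V * \<gamma> * ((\<epsilon> + t) * t) + V\<^sup>2 * ((\<epsilon> + t) * t)"
        using et V_ge_one gamma_pos by (intro add_mono mult_left_mono) auto
      finally show ?thesis unfolding A_def by (simp add: algebra_simps)
    qed
    have "\<bar>g * h - P\<bar> \<le> (KC * (\<epsilon> + t)\<^sup>2 * t) * H + (A * (\<epsilon> + t) * t) * (KH * (\<epsilon> + t))"
      by (rule abs_mult_deviation_le[OF dev(1) h_le P_le dev(2)])
    also have "\<dots> = (KC * H + A * KH) * (\<epsilon> + t)\<^sup>2 * t"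
      by (simp add: power2_eq_square algebra_simps)
    finally show ?thesis unfolding g_def h_def P_def c_def .
  qed
  then show ?thesis
    using KC(1) KH(1) \<open>0 \<le> H\<close> \<open>0 \<le> A\<close> by (intro exI[of _ "KC * H + A * KH"]) auto
qed

lemma sagdeev_expansion:
  "\<exists>K\<ge>0. \<forall>\<epsilon> t. 0 < \<epsilon> \<longrightarrow> \<epsilon> \<le> 1 \<longrightarrow> 0 \<le> t \<longrightarrow>
     \<bar>sagdeev \<sigma> (V + \<gamma> * \<epsilon>) (1 + t) - (V * \<gamma> * \<epsilon> * t\<^sup>2 - V\<^sup>2 * t ^ 3 / 3)\<bar> \<le> K * (\<epsilon> + t)\<^sup>2 * t\<^sup>2"
proof -
  obtain KD where KD: "0 \<le> KD" "\<And>\<epsilon> t. 0 < \<epsilon> \<Longrightarrow> \<epsilon> \<le> 1 \<Longrightarrow> 0 \<le> t \<Longrightarrow>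
      \<bar>poisson_rhs \<sigma> (V + \<gamma> * \<epsilon>) (1 + t) * h_of_n \<sigma> (V + \<gamma> * \<epsilon>) (1 + t)
        - (2 * V * \<gamma> * \<epsilon> * t - V\<^sup>2 * t\<^sup>2)\<bar> \<le> KD * (\<epsilon> + t)\<^sup>2 * t"
    using sagdeev_deriv_expansion by blast
  have "\<bar>sagdeev \<sigma> (V + \<gamma> * \<epsilon>) (1 + t) - (V * \<gamma> * \<epsilon> * t\<^sup>2 - V\<^sup>2 * t ^ 3 / 3)\<bar> \<le> KD * (\<epsilon> + t)\<^sup>2 * t\<^sup>2"
    if \<epsilon>: "0 < \<epsilon>" "\<epsilon> \<le> 1" and t: "0 \<le> t" for \<epsilon> t
  proof -
    define c where "c = V + \<gamma> * \<epsilon>"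
    define f where "f s = sagdeev \<sigma> c (1 + s) - (V * \<gamma> * \<epsilon> * s\<^sup>2 - V\<^sup>2 * s ^ 3 / 3)" for s
    have "\<bar>f t - f 0\<bar> \<le> (KD * (\<epsilon> + t)\<^sup>2 * t) * t"
    proof (rule abs_diff_le_deriv_bound[OF t])
      fix s assume s: "0 \<le> s" "s \<le> t"
      show "(f has_real_derivative
          poisson_rhs \<sigma> c (1 + s) * h_of_n \<sigma> c (1 + s) - (2 * V * \<gamma> * \<epsilon> * s - V\<^sup>2 * s\<^sup>2))
          (at s within {0..t})"
        unfolding f_def using s
        by (auto intro!: derivative_eq_intros simp: power2_eq_square algebra_simps)
      have "\<bar>poisson_rhs \<sigma> c (1 + s) * h_of_n \<sigma> c (1 + s) - (2 * V * \<gamma> * \<epsilon> * s - V\<^sup>2 * s\<^sup>2)\<bar>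
          \<le> KD * (\<epsilon> + s)\<^sup>2 * s"
        unfolding c_def using KD(2) \<epsilon> s by blast
      also have "\<dots> \<le> KD * (\<epsilon> + t)\<^sup>2 * t"
        using KD(1) \<epsilon> s by (intro mult_mono mult_left_mono power_mono) auto
      finally show "\<bar>poisson_rhs \<sigma> c (1 + s) * h_of_n \<sigma> c (1 + s) - (2 * V * \<gamma> * \<epsilon> * s - V\<^sup>2 * s\<^sup>2)\<bar>
          \<le> KD * (\<epsilon> + t)\<^sup>2 * t" .
    qed
    moreover have "f 0 = 0"
      unfolding f_def by (simp add: values_at_one)
    ultimately show ?thesis unfolding f_def c_def by (simp add: power2_eq_square mult.assoc)
  qed
  then show ?thesis
    using KD(1) by (intro exI[of _ KD]) auto
qed

lemma sagdeev_scaled: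
  assumes "0 < \<eta>"
  shows "\<forall>\<^sub>F \<epsilon> in at_right 0. \<forall>x. 0 \<le> x \<longrightarrow> x \<le> X \<longrightarrow>
    \<bar>sagdeev \<sigma> (V + \<gamma> * \<epsilon>) (1 + \<epsilon> * x) / \<epsilon> ^ 3 - kdv_sagdeev V \<gamma> x\<bar> \<le> \<eta> * x\<^sup>2"
proof -
  obtain K where K: "0 \<le> K" "\<And>\<epsilon> t. 0 < \<epsilon> \<Longrightarrow> \<epsilon> \<le> 1 \<Longrightarrow> 0 \<le> t \<Longrightarrow>
      \<bar>sagdeev \<sigma> (V + \<gamma> * \<epsilon>) (1 + t) - (V * \<gamma> * \<epsilon> * t\<^sup>2 - V\<^sup>2 * t ^ 3 / 3)\<bar> \<le> K * (\<epsilon> + t)\<^sup>2 * t\<^sup>2"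
    using sagdeev_expansion by blast
  show ?thesis
    using eventually_at_right_0_small[OF assms, of "K * (1 + X)\<^sup>2"]
  proof eventually_elim
    case (elim \<epsilon>)
    then have \<epsilon>: "0 < \<epsilon>" "\<epsilon> \<le> 1" by auto
    show ?case
    proof (intro allI impI)
      fix x assume x: "0 \<le> x" "x \<le> X"
      have "\<bar>sagdeev \<sigma> (V + \<gamma> * \<epsilon>) (1 + \<epsilon> * x) - \<epsilon> ^ 3 * kdv_sagdeev V \<gamma> x\<bar>
          \<le> K * (\<epsilon> + \<epsilon> * x)\<^sup>2 * (\<epsilon> * x)\<^sup>2"
        using K(2)[OF \<epsilon>, of "\<epsilon> * x"] \<epsilon> x unfolding kdv_sagdeev_def
        by (simp add: power2_eq_square power3_eq_cube algebra_simps)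
      then have "\<bar>sagdeev \<sigma> (V + \<gamma> * \<epsilon>) (1 + \<epsilon> * x) / \<epsilon> ^ 3 - kdv_sagdeev V \<gamma> x\<bar>
          \<le> K * (\<epsilon> + \<epsilon> * x)\<^sup>2 * (\<epsilon> * x)\<^sup>2 / \<epsilon> ^ 3"
        by (rule abs_divide_deviation_le[OF \<epsilon>(1)])
      also have "\<dots> = K * (1 + x)\<^sup>2 * \<epsilon> * x\<^sup>2"
        using \<epsilon> by (simp add: field_simps power2_eq_square power3_eq_cube)
      also have "\<dots> \<le> K * (1 + X)\<^sup>2 * \<epsilon> * x\<^sup>2"
        using K(1) \<epsilon> x by (intro mult_right_mono mult_left_mono power_mono) auto
      also have "\<dots> \<le> \<eta> * x\<^sup>2"
        using elim by (intro mult_right_mono) auto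
      finally show "\<bar>sagdeev \<sigma> (V + \<gamma> * \<epsilon>) (1 + \<epsilon> * x) / \<epsilon> ^ 3 - kdv_sagdeev V \<gamma> x\<bar>
          \<le> \<eta> * x\<^sup>2" .
    qed
  qed
qed

lemma poisson_rhs_scaled:
  assumes "0 < \<eta>"
  shows "\<forall>\<^sub>F \<epsilon> in at_right 0. \<forall>x. 0 \<le> x \<longrightarrow> x \<le> X \<longrightarrow>
    \<bar>poisson_rhs \<sigma> (V + \<gamma> * \<epsilon>) (1 + \<epsilon> * x) / \<epsilon>\<^sup>2 - (2 * V * \<gamma> * x - V\<^sup>2 * x\<^sup>2)\<bar> \<le> \<eta>"
proof -
  obtain K where K: "0 \<le> K" "\<And>\<epsilon> t. 0 < \<epsilon> \<Longrightarrow> \<epsilon> \<le> 1 \<Longrightarrow> 0 \<le> t \<Longrightarrow>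
      \<bar>poisson_rhs \<sigma> (V + \<gamma> * \<epsilon>) (1 + t) - (2 * V * \<gamma> * \<epsilon> * t - V\<^sup>2 * t\<^sup>2)\<bar> \<le> K * (\<epsilon> + t)\<^sup>2 * t"
    using poisson_rhs_expansion by blast
  show ?thesis
    using eventually_at_right_0_small[OF assms, of "K * (1 + X)\<^sup>2 * X"]
  proof eventually_elim
    case (elim \<epsilon>)
    then have \<epsilon>: "0 < \<epsilon>" "\<epsilon> \<le> 1" by auto
    show ?case
    proof (intro allI impI)
      fix x assume x: "0 \<le> x" "x \<le> X"
      have "\<bar>poisson_rhs \<sigma> (V + \<gamma> * \<epsilon>) (1 + \<epsilon> * x) - \<epsilon>\<^sup>2 * (2 * V * \<gamma> * x - V\<^sup>2 * x\<^sup>2)\<bar>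
          \<le> K * (\<epsilon> + \<epsilon> * x)\<^sup>2 * (\<epsilon> * x)"
        using K(2)[OF \<epsilon>, of "\<epsilon> * x"] \<epsilon> x by (simp add: power2_eq_square algebra_simps)
      then have "\<bar>poisson_rhs \<sigma> (V + \<gamma> * \<epsilon>) (1 + \<epsilon> * x) / \<epsilon>\<^sup>2 - (2 * V * \<gamma> * x - V\<^sup>2 * x\<^sup>2)\<bar>
          \<le> K * (\<epsilon> + \<epsilon> * x)\<^sup>2 * (\<epsilon> * x) / \<epsilon>\<^sup>2"
        by (rule abs_divide_deviation_le[OF \<epsilon>(1)])
      also have "\<dots> = K * (1 + x)\<^sup>2 * x * \<epsilon>"
        using \<epsilon> by (simp add: field_simps power2_eq_square)
      also have "\<dots> \<le> K * (1 + X)\<^sup>2 * X * \<epsilon>"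
        using K(1) \<epsilon> x by (intro mult_right_mono mult_mono mult_left_mono power_mono) auto
      also have "\<dots> \<le> \<eta>"
        using elim by simp
      finally show "\<bar>poisson_rhs \<sigma> (V + \<gamma> * \<epsilon>) (1 + \<epsilon> * x) / \<epsilon>\<^sup>2 - (2 * V * \<gamma> * x - V\<^sup>2 * x\<^sup>2)\<bar>
          \<le> \<eta>" .
    qed
  qed
qed

lemma h_of_n_scaled:
  assumes "0 < \<eta>"
  shows "\<forall>\<^sub>F \<epsilon> in at_right 0. \<forall>x. 0 \<le> x \<longrightarrow> x \<le> X \<longrightarrow>
    \<bar>h_of_n \<sigma> (V + \<gamma> * \<epsilon>) (1 + \<epsilon> * x) - 1\<bar> \<le> \<eta>"
proof -
  obtain K where K: "0 \<le> K" "\<And>\<epsilon> t. 0 < \<epsilon> \<Longrightarrow> \<epsilon> \<le> 1 \<Longrightarrow> 0 \<le> t \<Longrightarrow>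
      \<bar>h_of_n \<sigma> (V + \<gamma> * \<epsilon>) (1 + t) - 1\<bar> \<le> K * (\<epsilon> + t)"
    using h_of_n_expansion by blast
  show ?thesis
    using eventually_at_right_0_small[OF assms, of "K * (1 + X)"]
  proof eventually_elim
    case (elim \<epsilon>)
    then have \<epsilon>: "0 < \<epsilon>" "\<epsilon> \<le> 1" by auto
    show ?case
    proof (intro allI impI)
      fix x assume x: "0 \<le> x" "x \<le> X"
      have "\<bar>h_of_n \<sigma> (V + \<gamma> * \<epsilon>) (1 + \<epsilon> * x) - 1\<bar> \<le> K * (\<epsilon> + \<epsilon> * x)"
        using K(2)[OF \<epsilon>, of "\<epsilon> * x"] \<epsilon> x by simp
      also have "\<dots> \<le> K * (1 + X) * \<epsilon>"
        using K(1) \<epsilon> x by (simp add: algebra_simps mult_left_mono)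
      also have "\<dots> \<le> \<eta>"
        using elim by simp
      finally show "\<bar>h_of_n \<sigma> (V + \<gamma> * \<epsilon>) (1 + \<epsilon> * x) - 1\<bar> \<le> \<eta>" .
    qed
  qed
qed

lemma d_poisson_rhs_scaled:
  "\<exists>K\<ge>0. \<forall>\<^sub>F \<epsilon> in at_right 0. \<forall>x. 0 \<le> x \<longrightarrow> x \<le> X \<longrightarrow>
    \<bar>d_poisson_rhs \<sigma> (V + \<gamma> * \<epsilon>) (1 + \<epsilon> * x)\<bar> \<le> K * \<epsilon>"
proof -
  obtain KB where KB: "0 \<le> KB" "\<And>\<epsilon> t. 0 < \<epsilon> \<Longrightarrow> \<epsilon> \<le> 1 \<Longrightarrow> 0 \<le> t \<Longrightarrow>
      \<bar>d_poisson_rhs \<sigma> (V + \<gamma> * \<epsilon>) (1 + t) - (2 * V * \<gamma> * \<epsilon> - 2 * V\<^sup>2 * t)\<bar> \<le> KB * (\<epsilon> + t)\<^sup>2"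
    using d_poisson_rhs_expansion by blast
  define K where "K = 2 * V * \<gamma> + 2 * V\<^sup>2 * \<bar>X\<bar> + KB * (1 + \<bar>X\<bar>)\<^sup>2"
  have "0 \<le> K"
    unfolding K_def using KB(1) V_ge_one gamma_pos by simp
  moreover have "\<forall>\<^sub>F \<epsilon> in at_right 0. \<forall>x. 0 \<le> x \<longrightarrow> x \<le> X \<longrightarrow>
      \<bar>d_poisson_rhs \<sigma> (V + \<gamma> * \<epsilon>) (1 + \<epsilon> * x)\<bar> \<le> K * \<epsilon>"
    using eventually_at_right_0_small[OF zero_less_one, of 0]
  proof eventually_elim
    case (elim \<epsilon>)
    then have \<epsilon>: "0 < \<epsilon>" "\<epsilon> \<le> 1" by auto
    show ?case
    proof (intro allI impI)
      fix x assume x: "0 \<le> x" "x \<le> X"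
      have "\<bar>d_poisson_rhs \<sigma> (V + \<gamma> * \<epsilon>) (1 + \<epsilon> * x) - (2 * V * \<gamma> * \<epsilon> - 2 * V\<^sup>2 * (\<epsilon> * x))\<bar>
          \<le> KB * (\<epsilon> + \<epsilon> * x)\<^sup>2"
        using KB(2)[OF \<epsilon>, of "\<epsilon> * x"] \<epsilon> x by simp
      also have "\<dots> = KB * (1 + x)\<^sup>2 * \<epsilon>\<^sup>2"
        by (simp add: power2_eq_square algebra_simps)
      also have "\<dots> \<le> KB * (1 + \<bar>X\<bar>)\<^sup>2 * \<epsilon>"
        using KB(1) \<epsilon> x
        by (intro mult_mono mult_left_mono power_mono) (auto simp: power2_eq_square mult_left_le)
      finally have "\<bar>d_poisson_rhs \<sigma> (V + \<gamma> * \<epsilon>) (1 + \<epsilon> * x)\<bar>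
          \<le> \<bar>2 * V * \<gamma> * \<epsilon> - 2 * V\<^sup>2 * (\<epsilon> * x)\<bar> + KB * (1 + \<bar>X\<bar>)\<^sup>2 * \<epsilon>"
        by linarith
      also have "\<bar>2 * V * \<gamma> * \<epsilon> - 2 * V\<^sup>2 * (\<epsilon> * x)\<bar> \<le> (2 * V * \<gamma> + 2 * V\<^sup>2 * \<bar>X\<bar>) * \<epsilon>"
      proof -
        have "2 * V\<^sup>2 * (\<epsilon> * x) \<le> 2 * V\<^sup>2 * (\<epsilon> * \<bar>X\<bar>)"
          using \<epsilon> x by (intro mult_left_mono) auto
        moreover have "0 \<le> 2 * V * \<gamma> * \<epsilon>" "0 \<le> 2 * V\<^sup>2 * (\<epsilon> * x)"
          using \<epsilon> x V_ge_one gamma_pos by simp_all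
        ultimately show ?thesis by (simp add: abs_le_iff algebra_simps)
      qed
      finally show "\<bar>d_poisson_rhs \<sigma> (V + \<gamma> * \<epsilon>) (1 + \<epsilon> * x)\<bar> \<le> K * \<epsilon>"
        unfolding K_def by (simp add: algebra_simps)
    qed
  qed
  ultimately show ?thesis by blast
qed

lemma eventually_kdv_regime: "\<exists>K\<ge>0. \<forall>\<^sub>F \<epsilon> in at_right 0. kdv_regime \<sigma> \<gamma> V K \<epsilon>"
proof -
  obtain K where "0 \<le> K" and K: "\<forall>\<^sub>F \<epsilon> in at_right 0. \<forall>x. 0 \<le> x \<longrightarrow> x \<le> 25 * \<gamma> / (8 * V) \<longrightarrow>
      \<bar>d_poisson_rhs \<sigma> (V + \<gamma> * \<epsilon>) (1 + \<epsilon> * x)\<bar> \<le> K * \<epsilon>"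
    using d_poisson_rhs_scaled by blast
  have \<eta>: "0 < \<gamma> / 48" "0 < \<gamma>\<^sup>2 / 4" "0 < (1::real) / 4"
    using gamma_pos by simp_all
  have "\<forall>\<^sub>F \<epsilon> in at_right 0. kdv_regime \<sigma> \<gamma> V K \<epsilon>"
    using sagdeev_scaled[OF \<eta>(1), of "25 * \<gamma> / (8 * V)"] poisson_rhs_scaled[OF \<eta>(2), of "25 * \<gamma> / (8 * V)"]
      h_of_n_scaled[OF \<eta>(3), of "25 * \<gamma> / (8 * V)"] K
    unfolding kdv_regime_def by eventually_elim auto
  with \<open>0 \<le> K\<close> show ?thesis by blast
qed

end

section \<open>First integrals of a solitary wave\<close>

locale solitary_wave_profile =
  fixes \<sigma> \<gamma> V \<epsilon> :: real and n u \<phi> :: "real \<Rightarrow> real"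
  assumes wave: "solitary_wave \<sigma> \<gamma> V \<epsilon> n u \<phi>" and eps_pos: "0 < \<epsilon>"
begin

abbreviation speed :: real where "speed \<equiv> V + \<gamma> * \<epsilon>"

lemma n_pos: "0 < n x"
  and mass_eq: "- speed * deriv n x + deriv (\<lambda>y. n y * u y) x = 0"
  and momentum_eq: "- speed * deriv u x + u x * deriv u x + \<sigma> * deriv n x / n x = - deriv \<phi> x"
  and poisson_eq: "\<epsilon> * deriv (deriv \<phi>) x = exp (\<phi> x) - n x"
  and n_lim: "(n \<longlongrightarrow> 1) at_top" and u_lim: "(u \<longlongrightarrow> 0) at_top" and phi_lim: "(\<phi> \<longlongrightarrow> 0) at_top"
  and n_even: "n (- x) = n x" and phi_even: "\<phi> (- x) = \<phi> x"
  and n_decreasing: "0 < x \<Longrightarrow> x < y \<Longrightarrow> n y < n x"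
  using wave unfolding solitary_wave_def solves_system_def by blast+

lemma has_deriv_n: "(n has_real_derivative deriv n x) (at x)"
  and has_deriv_u: "(u has_real_derivative deriv u x) (at x)"
  and has_deriv_phi: "(\<phi> has_real_derivative deriv \<phi> x) (at x)"
  and has_deriv2_phi: "(deriv \<phi> has_real_derivative deriv (deriv \<phi>) x) (at x)"
  using wave smooth_fun_deriv
  unfolding solitary_wave_def solves_system_def by (metis smooth_fun_has_real_derivative)+

lemma u_eq: "u x = speed - speed / n x"
proof -
  have "n x * u x - speed * n x = 1 * 0 - speed * 1"
  proof (rule zero_derivative_eq_limit[where f = "\<lambda>y. n y * u y - speed * n y"])
    fix y
    have "((\<lambda>y. n y * u y) has_real_derivative deriv n y * u y + n y * deriv u y) (at y)"
      using has_deriv_n has_deriv_u by (auto intro!: derivative_eq_intros)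
    then have "deriv (\<lambda>y. n y * u y) y = deriv n y * u y + n y * deriv u y"
      by (rule DERIV_imp_deriv)
    then show "((\<lambda>y. n y * u y - speed * n y) has_real_derivative 0) (at y)"
      using mass_eq[of y] has_deriv_n has_deriv_u
      by (auto intro!: derivative_eq_intros simp: algebra_simps)
    show "((\<lambda>y. n y * u y - speed * n y) \<longlongrightarrow> 1 * 0 - speed * 1) at_top"
      by (intro tendsto_intros n_lim u_lim)
  qed
  then show ?thesis
    using n_pos[of x] by (simp add: field_simps)
qed

lemma phi_eq: "\<phi> x = phi_of_n \<sigma> speed (n x)"
proof -
  have "- speed * u x + (u x)\<^sup>2 / 2 + \<sigma> * ln (n x) + \<phi> x = - speed * 0 + 0\<^sup>2 / 2 + \<sigma> * ln 1 + 0"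
  proof (rule zero_derivative_eq_limit[where f = "\<lambda>y. - speed * u y + (u y)\<^sup>2 / 2 + \<sigma> * ln (n y) + \<phi> y"])
    fix y
    show "((\<lambda>y. - speed * u y + (u y)\<^sup>2 / 2 + \<sigma> * ln (n y) + \<phi> y) has_real_derivative 0) (at y)"
      using momentum_eq[of y] has_deriv_n has_deriv_u has_deriv_phi n_pos[of y]
      by (auto intro!: derivative_eq_intros simp: algebra_simps)
    show "((\<lambda>y. - speed * u y + (u y)\<^sup>2 / 2 + \<sigma> * ln (n y) + \<phi> y)
        \<longlongrightarrow> - speed * 0 + 0\<^sup>2 / 2 + \<sigma> * ln 1 + 0) at_top"
      by (intro tendsto_intros n_lim u_lim phi_lim) auto
  qed
  then have "\<phi> x = speed * u x - (u x)\<^sup>2 / 2 - \<sigma> * ln (n x)"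
    by (simp add: algebra_simps)
  also have "\<dots> = phi_of_n \<sigma> speed (n x)"
    using n_pos[of x] unfolding phi_of_n_def u_eq by (simp add: field_simps power2_eq_square)
  finally show ?thesis .
qed

lemma deriv_phi_eq: "deriv \<phi> x = h_of_n \<sigma> speed (n x) * deriv n x"
proof -
  have "((\<lambda>x. phi_of_n \<sigma> speed (n x)) has_real_derivative h_of_n \<sigma> speed (n x) * deriv n x) (at x)"
    using has_deriv_n n_pos by (rule phi_of_n_has_derivative)
  moreover have "(\<lambda>x. phi_of_n \<sigma> speed (n x)) = \<phi>"
    using phi_eq by auto
  ultimately show ?thesis
    by (simp add: DERIV_imp_deriv)
qed

lemma poisson_rhs_eq: "\<epsilon> * deriv (deriv \<phi>) x = poisson_rhs \<sigma> speed (n x)"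
  unfolding poisson_eq poisson_rhs_def phi_eq ..

lemma energy_identity: "\<epsilon> / 2 * (deriv \<phi> x)\<^sup>2 = sagdeev \<sigma> speed (n x)"
proof -
  define W where "W y = \<epsilon> / 2 * (deriv \<phi> y)\<^sup>2 - sagdeev \<sigma> speed (n y)" for y
  have "(W has_real_derivative 0) (at y)" for y
  proof -
    have "(W has_real_derivative deriv \<phi> y * (\<epsilon> * deriv (deriv \<phi>) y)
        - poisson_rhs \<sigma> speed (n y) * (h_of_n \<sigma> speed (n y) * deriv n y)) (at y)"
      unfolding W_def using has_deriv2_phi has_deriv_n n_pos
      by (auto intro!: derivative_eq_intros simp: power2_eq_square algebra_simps)
    then show ?thesis
      unfolding poisson_rhs_eq deriv_phi_eq[symmetric] by simp
  qed
  then have W_const: "W y = W 0" for y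
    using DERIV_isconst_all by blast
  have "((\<lambda>y. sagdeev \<sigma> speed (n y)) \<longlongrightarrow> exp 0 + speed\<^sup>2 / 1 + \<sigma> * 1 - 1 - speed\<^sup>2 - \<sigma>) at_top"
    unfolding sagdeev_def phi_eq[symmetric] by (intro tendsto_intros n_lim phi_lim) simp
  then have "((\<lambda>y. 2 / \<epsilon> * (W 0 + sagdeev \<sigma> speed (n y))) \<longlongrightarrow> 2 / \<epsilon> * (W 0 + 0)) at_top"
    by (intro tendsto_intros) simp
  moreover have "2 / \<epsilon> * (W 0 + sagdeev \<sigma> speed (n y)) = (deriv \<phi> y)\<^sup>2" for y
    using W_const[of y] eps_pos unfolding W_def by (simp add: field_simps)
  ultimately have "((\<lambda>y. (deriv \<phi> y)\<^sup>2) \<longlongrightarrow> 2 / \<epsilon> * W 0) at_top"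
    by simp
  from deriv_square_limit_zero[OF phi_lim has_deriv_phi this] have "W 0 = 0"
    using eps_pos by simp
  then show ?thesis
    using W_const[of x] unfolding W_def by simp
qed

lemma deriv_phi_0: "deriv \<phi> 0 = 0"
  using even_deriv_zero[OF phi_even has_deriv_phi] .

lemma n_bounds: "1 < n x \<and> n x \<le> n 0"
  using even_decreasing_bounds[OF n_even n_decreasing DERIV_isCont[OF has_deriv_n] n_lim] .

lemma sagdeev_nonneg:
  assumes "1 < m" "m \<le> n 0"
  shows "0 \<le> sagdeev \<sigma> speed m"
proof -
  obtain N where "\<And>y. N \<le> y \<Longrightarrow> n y < m"
    using order_tendstoD(2)[OF n_lim assms(1)] by (auto simp: eventually_at_top_linorder)
  then obtain y where y: "0 \<le> y" "n y < m"
    by (metis max.cobounded1 max.cobounded2)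
  obtain \<xi> where "n \<xi> = m"
    using IVT2'[of n y m 0] y assms(2) DERIV_isCont[OF has_deriv_n]
    by (auto intro: continuous_at_imp_continuous_on)
  then show ?thesis
    using energy_identity[of \<xi>] eps_pos by (metis zero_le_power2 mult_nonneg_nonneg
      less_imp_le divide_nonneg_pos zero_less_numeral)
qed

lemma deriv_Nt: "deriv (\<lambda>\<xi>. (n \<xi> - 1) / \<epsilon>) \<xi> = deriv n \<xi> / \<epsilon>"
  by (rule DERIV_imp_deriv) (use has_deriv_n eps_pos in \<open>auto intro!: derivative_eq_intros\<close>)

lemma deriv_Et: "deriv (\<lambda>\<xi>. - deriv \<phi> \<xi> / \<epsilon>) = (\<lambda>\<xi>. - poisson_rhs \<sigma> speed (n \<xi>) / \<epsilon>\<^sup>2)"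
proof
  fix \<xi>
  have "deriv (\<lambda>\<xi>. - deriv \<phi> \<xi> / \<epsilon>) \<xi> = - deriv (deriv \<phi>) \<xi> / \<epsilon>"
    by (rule DERIV_imp_deriv) (use has_deriv2_phi eps_pos in \<open>auto intro!: derivative_eq_intros\<close>)
  also have "\<dots> = - poisson_rhs \<sigma> speed (n \<xi>) / \<epsilon>\<^sup>2"
    using poisson_rhs_eq[of \<xi>] eps_pos by (simp add: field_simps power2_eq_square)
  finally show "deriv (\<lambda>\<xi>. - deriv \<phi> \<xi> / \<epsilon>) \<xi> = - poisson_rhs \<sigma> speed (n \<xi>) / \<epsilon>\<^sup>2" .
qed

lemma deriv2_Et:
  "deriv (deriv (\<lambda>\<xi>. - deriv \<phi> \<xi> / \<epsilon>)) \<xi> = - d_poisson_rhs \<sigma> speed (n \<xi>) * deriv n \<xi> / \<epsilon>\<^sup>2"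
  unfolding deriv_Et
  by (rule DERIV_imp_deriv)
    (use has_deriv_n n_pos eps_pos in \<open>auto intro!: derivative_eq_intros simp: field_simps eval_nat_numeral\<close>)

end

section \<open>The small-amplitude regime\<close>

locale small_amplitude_wave = solitary_wave_profile +
  fixes K :: real
  assumes sigma_nonneg: "0 \<le> \<sigma>" and gamma_pos: "0 < \<gamma>" and V_def: "V = sqrt (1 + \<sigma>)"
    and regime: "kdv_regime \<sigma> \<gamma> V K \<epsilon>"
begin

lemma
  assumes "0 \<le> x" "x \<le> 25 * \<gamma> / (8 * V)"
  shows sagdeev_near_kdv:
      "\<bar>sagdeev \<sigma> speed (1 + \<epsilon> * x) / \<epsilon> ^ 3 - kdv_sagdeev V \<gamma> x\<bar> \<le> \<gamma> / 48 * x\<^sup>2"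
    and poisson_rhs_near_kdv:
      "\<bar>poisson_rhs \<sigma> speed (1 + \<epsilon> * x) / \<epsilon>\<^sup>2 - (2 * V * \<gamma> * x - V\<^sup>2 * x\<^sup>2)\<bar> \<le> \<gamma>\<^sup>2 / 4"
    and h_of_n_near_one: "\<bar>h_of_n \<sigma> speed (1 + \<epsilon> * x) - 1\<bar> \<le> 1 / 4"
    and d_poisson_rhs_small: "\<bar>d_poisson_rhs \<sigma> speed (1 + \<epsilon> * x)\<bar> \<le> K * \<epsilon>"
  using regime assms unfolding kdv_regime_def by blast+

lemma one_le_V: "1 \<le> V"
  using V_ge_one[OF sigma_nonneg gamma_pos V_def] .

lemma n_scaled: "n \<xi> = 1 + \<epsilon> * ((n \<xi> - 1) / \<epsilon>)"
  using eps_pos by simp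

text \<open>Both amplitude bounds compare the sign of sagdeev with that of kdv_sagdeev: sagdeev is nonnegative
  on (1, n 0] and vanishes at n 0 because \<phi>'(0) = 0.\<close>

lemma amplitude_lt: "(n 0 - 1) / \<epsilon> < 25 * \<gamma> / (8 * V)"
proof (rule ccontr)
  define x1 where "x1 = 25 * \<gamma> / (8 * V)"
  have "0 < x1"
    unfolding x1_def using gamma_pos one_le_V by simp
  assume "\<not> (n 0 - 1) / \<epsilon> < 25 * \<gamma> / (8 * V)"
  then have "1 + \<epsilon> * x1 \<le> n 0"
    using eps_pos unfolding x1_def by (simp add: field_simps)
  then have "0 \<le> sagdeev \<sigma> speed (1 + \<epsilon> * x1) / \<epsilon> ^ 3"
    using sagdeev_nonneg \<open>0 < x1\<close> eps_pos by simp
  moreover have "kdv_sagdeev V \<gamma> x1 \<le> x1\<^sup>2 * (V * \<gamma> - V * (25 * \<gamma> / 8) / 3)"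
    using one_le_V unfolding x1_def by (intro kdv_sagdeev_upper) (auto simp: field_simps)
  moreover have "\<gamma> * x1\<^sup>2 \<le> V * \<gamma> * x1\<^sup>2"
    using one_le_V gamma_pos by (simp add: mult_right_mono)
  moreover have "0 < \<gamma> * x1\<^sup>2"
    using gamma_pos \<open>0 < x1\<close> by simp
  ultimately show False
    using sagdeev_near_kdv[of x1] \<open>0 < x1\<close> unfolding x1_def abs_le_iff
    by (simp add: algebra_simps)
qed

lemma amplitude_gt: "23 * \<gamma> / (8 * V) < (n 0 - 1) / \<epsilon>"
proof (rule ccontr)
  define x0 where "x0 = (n 0 - 1) / \<epsilon>"
  have "0 < x0"
    unfolding x0_def using n_bounds[of 0] eps_pos by simp
  assume "\<not> 23 * \<gamma> / (8 * V) < (n 0 - 1) / \<epsilon>"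
  then have "V * x0 \<le> 23 * \<gamma> / 8"
    using one_le_V unfolding x0_def by (simp add: field_simps)
  have "sagdeev \<sigma> speed (1 + \<epsilon> * x0) = 0"
    using energy_identity[of 0] n_scaled[of 0] unfolding deriv_phi_0 x0_def by simp
  moreover have "x0\<^sup>2 * (V * \<gamma> - V * (23 * \<gamma> / 8) / 3) \<le> kdv_sagdeev V \<gamma> x0"
    using one_le_V \<open>V * x0 \<le> 23 * \<gamma> / 8\<close> by (intro kdv_sagdeev_lower) auto
  moreover have "\<gamma> * x0\<^sup>2 \<le> V * \<gamma> * x0\<^sup>2"
    using one_le_V gamma_pos by (simp add: mult_right_mono)
  moreover have "0 < \<gamma> * x0\<^sup>2"
    using gamma_pos \<open>0 < x0\<close> by simp
  ultimately show False
    using sagdeev_near_kdv[of x0] \<open>0 < x0\<close> amplitude_lt unfolding x0_def[symmetric] abs_le_iff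
    by (simp add: algebra_simps)
qed

lemma Nt_0_gt: "2 * \<gamma> / V < (n 0 - 1) / \<epsilon>"
proof -
  have "2 * \<gamma> / V < 23 * \<gamma> / (8 * V)"
    using one_le_V gamma_pos by (simp add: field_simps)
  then show ?thesis
    using amplitude_gt by linarith
qed

lemma scaled_n_bounds: "0 < (n \<xi> - 1) / \<epsilon>" "(n \<xi> - 1) / \<epsilon> < 25 * \<gamma> / (8 * V)"
proof -
  have "(n \<xi> - 1) / \<epsilon> \<le> (n 0 - 1) / \<epsilon>"
    using n_bounds[of \<xi>] eps_pos by (simp add: divide_right_mono)
  then show "(n \<xi> - 1) / \<epsilon> < 25 * \<gamma> / (8 * V)"
    using amplitude_lt by linarith
  show "0 < (n \<xi> - 1) / \<epsilon>"
    using n_bounds[of \<xi>] eps_pos by simp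
qed

lemma K_nonneg: "0 \<le> K"
proof -
  have "0 \<le> K * \<epsilon>"
    using order_trans[OF abs_ge_zero d_poisson_rhs_small[of 0]] gamma_pos one_le_V by simp
  then show ?thesis
    using eps_pos by (simp add: zero_le_mult_iff)
qed

lemma deriv_Et_0_bounds:
  "2 * \<gamma>\<^sup>2 < deriv (\<lambda>\<xi>. - deriv \<phi> \<xi> / \<epsilon>) 0" "deriv (\<lambda>\<xi>. - deriv \<phi> \<xi> / \<epsilon>) 0 < 4 * \<gamma>\<^sup>2"
proof -
  define x0 where "x0 = (n 0 - 1) / \<epsilon>"
  define y where "y = V * x0"
  have V: "0 < V" using one_le_V by simp
  have "23 * \<gamma> / 8 < y" "y < 25 * \<gamma> / 8"
    using amplitude_gt amplitude_lt V unfolding y_def x0_def by (simp_all add: field_simps)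
  then have "(15 * \<gamma> / 8)\<^sup>2 < (y - \<gamma>)\<^sup>2" "(y - \<gamma>)\<^sup>2 < (17 * \<gamma> / 8)\<^sup>2"
    using gamma_pos by (auto intro!: power_strict_mono)
  then have y_sq: "225 / 64 * \<gamma>\<^sup>2 < (y - \<gamma>)\<^sup>2" "(y - \<gamma>)\<^sup>2 < 289 / 64 * \<gamma>\<^sup>2"
    by (simp_all add: power2_eq_square)
  have "deriv (\<lambda>\<xi>. - deriv \<phi> \<xi> / \<epsilon>) 0 = - (poisson_rhs \<sigma> speed (1 + \<epsilon> * x0) / \<epsilon>\<^sup>2)"
    unfolding deriv_Et x0_def using n_scaled[of 0] by simp
  moreover have "2 * V * \<gamma> * x0 - V\<^sup>2 * x0\<^sup>2 = \<gamma>\<^sup>2 - (y - \<gamma>)\<^sup>2"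
    unfolding y_def by (simp add: power2_eq_square algebra_simps)
  moreover have "0 < x0" "x0 \<le> 25 * \<gamma> / (8 * V)"
    using scaled_n_bounds[of 0] unfolding x0_def by auto
  ultimately show "2 * \<gamma>\<^sup>2 < deriv (\<lambda>\<xi>. - deriv \<phi> \<xi> / \<epsilon>) 0" "deriv (\<lambda>\<xi>. - deriv \<phi> \<xi> / \<epsilon>) 0 < 4 * \<gamma>\<^sup>2"
    using poisson_rhs_near_kdv[of x0] y_sq gamma_pos unfolding abs_le_iff by auto
qed

lemma h_of_n_bounds: "3 / 4 \<le> h_of_n \<sigma> speed (n \<xi>)" "h_of_n \<sigma> speed (n \<xi>) \<le> 5 / 4"
proof -
  define x where "x = (n \<xi> - 1) / \<epsilon>"
  have "\<bar>h_of_n \<sigma> speed (n \<xi>) - 1\<bar> \<le> 1 / 4"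
    using h_of_n_near_one[of x] scaled_n_bounds[of \<xi>, folded x_def] n_scaled[of \<xi>, folded x_def]
    by simp
  then show "3 / 4 \<le> h_of_n \<sigma> speed (n \<xi>)" "h_of_n \<sigma> speed (n \<xi>) \<le> 5 / 4"
    unfolding abs_le_iff by linarith+
qed

lemma SUP_h_of_n_bounds:
  "1 / 2 < (SUP \<xi>. h_of_n \<sigma> speed (n \<xi>))" "(SUP \<xi>. h_of_n \<sigma> speed (n \<xi>)) < 3 / 2"
proof -
  have "bdd_above (range (\<lambda>\<xi>. h_of_n \<sigma> speed (n \<xi>)))"
    using h_of_n_bounds(2) by (intro bdd_aboveI2)
  then have "h_of_n \<sigma> speed (n 0) \<le> (SUP \<xi>. h_of_n \<sigma> speed (n \<xi>))"
    by (rule cSUP_upper[rotated]) simp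
  then show "1 / 2 < (SUP \<xi>. h_of_n \<sigma> speed (n \<xi>))"
    using h_of_n_bounds(1)[of 0] by linarith
  have "(SUP \<xi>. h_of_n \<sigma> speed (n \<xi>)) \<le> 5 / 4"
    using h_of_n_bounds(2) by (intro cSUP_least) auto
  then show "(SUP \<xi>. h_of_n \<sigma> speed (n \<xi>)) < 3 / 2"
    by linarith
qed

lemma Et_squared_near_kdv:
  "\<bar>(deriv \<phi> \<xi> / \<epsilon>)\<^sup>2 / 2 - kdv_sagdeev V \<gamma> ((n \<xi> - 1) / \<epsilon>)\<bar> \<le> \<gamma> / 48 * ((n \<xi> - 1) / \<epsilon>)\<^sup>2"
proof -
  define x where "x = (n \<xi> - 1) / \<epsilon>"
  have "(deriv \<phi> \<xi> / \<epsilon>)\<^sup>2 / 2 = sagdeev \<sigma> speed (1 + \<epsilon> * x) / \<epsilon> ^ 3"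
    using energy_identity[of \<xi>] eps_pos n_scaled[of \<xi>, folded x_def]
    by (simp add: field_simps power2_eq_square power3_eq_cube)
  then show ?thesis
    using sagdeev_near_kdv[of x] scaled_n_bounds[of \<xi>, folded x_def] unfolding x_def[symmetric] by simp
qed

lemma Et_squared_le: "(deriv \<phi> \<xi> / \<epsilon>)\<^sup>2 \<le> 2 * (V + 1) * \<gamma> * (25 * \<gamma> / (8 * V))\<^sup>2"
proof -
  define x where "x = (n \<xi> - 1) / \<epsilon>"
  have x: "0 < x" "x < 25 * \<gamma> / (8 * V)"
    using scaled_n_bounds unfolding x_def by auto
  have "kdv_sagdeev V \<gamma> x \<le> x\<^sup>2 * (V * \<gamma> - V * 0 / 3)"
    using x one_le_V by (intro kdv_sagdeev_upper) auto
  then have "(deriv \<phi> \<xi> / \<epsilon>)\<^sup>2 \<le> 2 * (V + 1) * \<gamma> * x\<^sup>2"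
    using Et_squared_near_kdv[of \<xi>] gamma_pos unfolding x_def[symmetric] abs_le_iff
    by (simp add: algebra_simps)
  also have "\<dots> \<le> 2 * (V + 1) * \<gamma> * (25 * \<gamma> / (8 * V))\<^sup>2"
    using x one_le_V gamma_pos by (intro mult_left_mono power_mono) auto
  finally show ?thesis .
qed

lemma derivatives_bound:
  "\<bar>deriv (\<lambda>\<xi>. (n \<xi> - 1) / \<epsilon>) \<xi>\<bar> + \<bar>- deriv \<phi> \<xi> / \<epsilon>\<bar> + \<bar>deriv (deriv (\<lambda>\<xi>. - deriv \<phi> \<xi> / \<epsilon>)) \<xi>\<bar>
    \<le> (3 + 2 * K) * (1 + 2 * (V + 1) * \<gamma> * (25 * \<gamma> / (8 * V))\<^sup>2)"
proof -
  define Nt' Et where "Nt' = deriv n \<xi> / \<epsilon>" and "Et = deriv \<phi> \<xi> / \<epsilon>"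
  have "3 / 4 * \<bar>Nt'\<bar> \<le> \<bar>h_of_n \<sigma> speed (n \<xi>)\<bar> * \<bar>Nt'\<bar>"
    using h_of_n_bounds(1)[of \<xi>] by (intro mult_right_mono) auto
  also have "\<dots> = \<bar>Et\<bar>"
    unfolding Et_def Nt'_def deriv_phi_eq by (simp add: abs_mult)
  finally have Nt'_le: "\<bar>Nt'\<bar> \<le> 2 * \<bar>Et\<bar>"
    by linarith
  have "\<bar>deriv (deriv (\<lambda>\<xi>. - deriv \<phi> \<xi> / \<epsilon>)) \<xi>\<bar> = \<bar>d_poisson_rhs \<sigma> speed (n \<xi>)\<bar> / \<epsilon> * \<bar>Nt'\<bar>"
    unfolding deriv2_Et Nt'_def using eps_pos by (simp add: abs_mult power2_eq_square)
  also have "\<dots> \<le> K * \<bar>Nt'\<bar>"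
  proof -
    define x where "x = (n \<xi> - 1) / \<epsilon>"
    have "\<bar>d_poisson_rhs \<sigma> speed (n \<xi>)\<bar> \<le> K * \<epsilon>"
      using d_poisson_rhs_small[of x] scaled_n_bounds[of \<xi>, folded x_def] n_scaled[of \<xi>, folded x_def]
      by simp
    then show ?thesis
      using eps_pos by (intro mult_right_mono) (auto simp: divide_le_eq)
  qed
  also have "\<dots> \<le> K * (2 * \<bar>Et\<bar>)"
    using Nt'_le K_nonneg by (rule mult_left_mono)
  finally have Et''_le: "\<bar>deriv (deriv (\<lambda>\<xi>. - deriv \<phi> \<xi> / \<epsilon>)) \<xi>\<bar> \<le> K * (2 * \<bar>Et\<bar>)" .
  have "\<bar>Et\<bar> \<le> 1 + Et\<^sup>2"
    by (rule abs_le_one_plus_square)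
  then have "\<bar>Et\<bar> \<le> 1 + 2 * (V + 1) * \<gamma> * (25 * \<gamma> / (8 * V))\<^sup>2"
    using Et_squared_le[of \<xi>] unfolding Et_def by linarith
  then have "(3 + 2 * K) * \<bar>Et\<bar> \<le> (3 + 2 * K) * (1 + 2 * (V + 1) * \<gamma> * (25 * \<gamma> / (8 * V))\<^sup>2)"
    using K_nonneg by (intro mult_left_mono) auto
  moreover have "(3 + 2 * K) * \<bar>Et\<bar> = 3 * \<bar>Et\<bar> + K * (2 * \<bar>Et\<bar>)"
    by (simp add: algebra_simps)
  ultimately show ?thesis
    using Nt'_le Et''_le unfolding deriv_Nt Nt'_def[symmetric] Et_def by simp
qed

lemma Et_dominates_Nt:
  assumes "(n \<xi> - 1) / \<epsilon> \<le> 3 * \<gamma> / (4 * V)"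
  shows "sqrt \<gamma> * ((n \<xi> - 1) / \<epsilon>) < \<bar>- deriv \<phi> \<xi> / \<epsilon>\<bar>"
proof -
  define x where "x = (n \<xi> - 1) / \<epsilon>"
  have x: "0 < x" "V * x \<le> 3 * \<gamma> / 4"
    using scaled_n_bounds[of \<xi>] assms one_le_V unfolding x_def by (auto simp: field_simps)
  have "x\<^sup>2 * (V * \<gamma> - V * (3 * \<gamma> / 4) / 3) \<le> kdv_sagdeev V \<gamma> x"
    using x one_le_V by (intro kdv_sagdeev_lower) auto
  moreover have "\<gamma> * x\<^sup>2 \<le> V * \<gamma> * x\<^sup>2"
    using one_le_V gamma_pos by (simp add: mult_right_mono)
  moreover have "0 < \<gamma> * x\<^sup>2"
    using x gamma_pos by simp
  ultimately have "\<gamma> * x\<^sup>2 < (deriv \<phi> \<xi> / \<epsilon>)\<^sup>2"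
    using Et_squared_near_kdv[of \<xi>] unfolding x_def[symmetric] abs_le_iff
    by (simp add: algebra_simps)
  then have "sqrt (\<gamma> * x\<^sup>2) < sqrt ((deriv \<phi> \<xi> / \<epsilon>)\<^sup>2)"
    by (rule real_sqrt_less_mono)
  then have "sqrt \<gamma> * x < \<bar>deriv \<phi> \<xi> / \<epsilon>\<bar>"
    using x by (simp add: real_sqrt_mult)
  then show ?thesis
    unfolding x_def by simp
qed

end

theorem lemma4p1:
  fixes \<sigma> \<gamma> V :: real
  assumes "\<sigma> \<ge> 0" and "\<gamma> > 0" and "V = sqrt (1 + \<sigma>)"
  shows "\<exists>\<epsilon>0 > 0. \<exists>C > 0. \<exists>\<delta>0 > 0.
    (\<forall>\<epsilon> n u \<phi>. 0 < \<epsilon> \<and> \<epsilon> < \<epsilon>0 \<and> solitary_wave \<sigma> \<gamma> V \<epsilon> n u \<phi> \<longrightarrow>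
      (let Nt = (\<lambda>\<xi>. (n \<xi> - 1) / \<epsilon>);
           Et = (\<lambda>\<xi>. - deriv \<phi> \<xi> / \<epsilon>);
           h = (\<lambda>m. (V + \<gamma> * \<epsilon>)\<^sup>2 / m ^ 3 - \<sigma> / m)
       in Nt 0 > 2 * \<gamma> / V \<and>
          4 * \<gamma>\<^sup>2 > deriv Et 0 \<and> deriv Et 0 > 2 * \<gamma>\<^sup>2 \<and>
          1/2 < (SUP \<xi>. h (n \<xi>)) \<and> (SUP \<xi>. h (n \<xi>)) < 3/2 \<and>
          (\<forall>\<xi>. \<bar>deriv Nt \<xi>\<bar> + \<bar>Et \<xi>\<bar> + \<bar>deriv (deriv Et) \<xi>\<bar> \<le> C) \<and>
          (\<forall>\<delta>. 0 < \<delta> \<and> \<delta> < \<delta>0 \<longrightarrow>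
             (\<forall>\<xi>. Nt \<xi> \<le> \<delta> \<longrightarrow> \<bar>Et \<xi>\<bar> > sqrt \<gamma> * Nt \<xi>))))"
proof -
  have V: "1 \<le> V" using V_ge_one[OF assms] .
  obtain K where "0 \<le> K" and "\<forall>\<^sub>F \<epsilon> in at_right 0. kdv_regime \<sigma> \<gamma> V K \<epsilon>"
    using eventually_kdv_regime[OF assms] by blast
  then obtain \<epsilon>0 where "0 < \<epsilon>0" and regime: "\<And>\<epsilon>. 0 < \<epsilon> \<Longrightarrow> \<epsilon> < \<epsilon>0 \<Longrightarrow> kdv_regime \<sigma> \<gamma> V K \<epsilon>"
    by (auto simp: eventually_at_right_field)
  define C where "C = (3 + 2 * K) * (1 + 2 * (V + 1) * \<gamma> * (25 * \<gamma> / (8 * V))\<^sup>2)"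
  have "0 < C" and "0 < 3 * \<gamma> / (4 * V)"
    unfolding C_def using \<open>0 \<le> K\<close> V assms(2) by (simp_all add: add_pos_nonneg)
  show ?thesis
  proof (rule exI[of _ \<epsilon>0], rule conjI[OF \<open>0 < \<epsilon>0\<close>], rule exI[of _ C], rule conjI[OF \<open>0 < C\<close>],
      rule exI[of _ "3 * \<gamma> / (4 * V)"], rule conjI[OF \<open>0 < 3 * \<gamma> / (4 * V)\<close>], intro allI impI, goal_cases)
    case (1 \<epsilon> n u \<phi>)
    then interpret small_amplitude_wave \<sigma> \<gamma> V \<epsilon> n u \<phi> K
      using assms regime by unfold_locales auto
    show ?case
      using Nt_0_gt deriv_Et_0_bounds SUP_h_of_n_bounds derivatives_bound
      unfolding Let_def h_of_n_def C_def by (blast intro: Et_dominates_Nt order_trans less_imp_le)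
  qed
qed

end
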